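(* Given an NC-spectrum graph $G=(V,E)$ with nodes $x_0,\dots,x_k,y_k,\dots,y_0$, the values $\mathrm{lce}(z)$ and $\mathrm{dia}(z)$ for all nodes $z$ (as defined in the context) can be computed in $O(|V|+|E|)$ time.
   Context: Fix a finite set $\mathcal{R}$ of positive reals (the amino acid masses). A real $m$ is an amino-acid mass sum if $m=r_1+\cdots+r_t$ for some $t\ge1$, $r_i\in\mathcal{R}$ (repetitions allowed). Given a peptide mass $W$ and $k$ ion masses $w_1,\dots,w_k$, the NC-spectrum graph $G=(V,E)$ has vertex set $V=\{N_0,\dots,N_k,C_0,\dots,C_k\}$ ($|V|=2k+2$) with coordinates $\mathrm{cord}(N_0)=0$, $\mathrm{cord}(C_0)=W-18$, $\mathrm{cord}(N_j)=w_j-1$, $\mathrm{cord}(C_j)=W-w_j$ ($1\le j\le k$); for $j\ge1$, $N_j,C_j$ are derived from the $j$-th ion. There is an edge from $u$ to $v$ ($E(u,v)=1$, else $0$) iff $u,v$ are not derived from the same ion, $\mathrm{cord}(u)<\mathrm{cord}(v)$, and $\mathrm{cord}(v)-\mathrm{cord}(u)$ is an amino-acid mass sum. The nodes are listed in increasing coordinate order as $x_0,\dots,x_k,y_k,\dots,y_0$, with $x_0=N_0$, $y_0=C_0$ and $\{x_j,y_j\}$ the pair derived from one ion ($j\ge1$); every edge goes from a node to a later node in this list. The graph is stored (e.g. with adjacency lists) so that edge queries take $O(1)$ time and the edges entering or leaving a node can be listed in time proportional to their number. The table $M$: for $0\le i,j\le k$, $M(i,j)=1$ if there exist a directed path $L$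 from $x_0$ to $x_i$ and a directed path $R$ from $y_j$ to $y_0$ (a path may be a single node) such that $L\cup R$ contains exactly one of $x_p$ and $y_p$ for every $1\le p\le\max(i,j)$, and $M(i,j)=0$ otherwise. For $0\le i\le k$: $\mathrm{lce}(x_i)=j-i$ where $j\ge i$ is the largest index with $E(x_i,x_{i+1})=\dots=E(x_{j-1},x_j)=1$; $\mathrm{lce}(y_i)=i-j$ where $j\le i$ is the smallest index with $E(y_i,y_{i-1})=\dots=E(y_{j+1},y_j)=1$. Also $\mathrm{dia}(x_j)=M(j,j-1)$ and $\mathrm{dia}(y_j)=M(j-1,j)$ for $0<j\le k$, and $\mathrm{dia}(x_0)=\mathrm{dia}(y_0)=1$. *)

theory Defs
  imports Complex_Main
begin

text \<open>Node positions: 0..2k+1 in the order x_0,...,x_k,y_k,...,y_0, i.e.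
  x_i is position i and y_i is position 2k+1-i.\<close>

definition Xn :: "nat \<Rightarrow> nat \<Rightarrow> nat" where "Xn k i = i"
definition Yn :: "nat \<Rightarrow> nat \<Rightarrow> nat" where "Yn k i = 2*k + 1 - i"

definition amino_sum :: "real set \<Rightarrow> real \<Rightarrow> bool" where
  "amino_sum R m \<longleftrightarrow> (\<exists>rs. rs \<noteq> [] \<and> set rs \<subseteq> R \<and> m = sum_list rs)"

text \<open>Ions are numbered 1..k so that the j-th ion yields the pair x_j, y_j.
  sw j says whether x_j is C_j (True) or N_j (False).
  cord(N_0)=0, cord(C_0)=W-18, cord(N_j)=w_j-1, cord(C_j)=W-w_j.\<close>
definition pos_cord :: "real \<Rightarrow> (nat \<Rightarrow> real) \<Rightarrow> (nat \<Rightarrow> bool) \<Rightarrow> nat \<Rightarrow> nat \<Rightarrow> real" where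
  "pos_cord W w sw k p =
     (if p = 0 then 0
      else if p \<le> k then (if sw p then W - w p else w p - 1)
      else if p < 2*k + 1 then
        (let j = 2*k + 1 - p in if sw j then w j - 1 else W - w j)
      else W - 18)"

text \<open>Ion from which the node at position p is derived (0 = N_0 / C_0, not derived from an ion).\<close>
definition ion_of :: "nat \<Rightarrow> nat \<Rightarrow> nat" where
  "ion_of k p = (if 1 \<le> p \<and> p \<le> k then p else if k < p \<and> p \<le> 2*k then 2*k + 1 - p else 0)"

definition nc_edge :: "real set \<Rightarrow> real \<Rightarrow> (nat \<Rightarrow> real) \<Rightarrow> (nat \<Rightarrow> bool) \<Rightarrow> nat \<Rightarrow> nat \<Rightarrow> nat \<Rightarrow> bool" where
  "nc_edge R W w sw k u v \<longleftrightarrow>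
     u \<le> 2*k + 1 \<and> v \<le> 2*k + 1 \<and>
     \<not> (ion_of k u \<noteq> 0 \<and> ion_of k u = ion_of k v) \<and>
     pos_cord W w sw k u < pos_cord W w sw k v \<and>
     amino_sum R (pos_cord W w sw k v - pos_cord W w sw k u)"

definition sorted_listing :: "real \<Rightarrow> (nat \<Rightarrow> real) \<Rightarrow> (nat \<Rightarrow> bool) \<Rightarrow> nat \<Rightarrow> bool" where
  "sorted_listing W w sw k \<longleftrightarrow>
     (\<forall>p q. p \<le> q \<and> q \<le> 2*k + 1 \<longrightarrow> pos_cord W w sw k p \<le> pos_cord W w sw k q)"

definition is_path :: "(nat \<Rightarrow> nat \<Rightarrow> bool) \<Rightarrow> nat list \<Rightarrow> bool" where
  "is_path E xs \<longleftrightarrow> xs \<noteq> [] \<and> (\<forall>n. Suc n < length xs \<longrightarrow> E (xs ! n) (xs ! Suc n))"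

definition Mtab :: "(nat \<Rightarrow> nat \<Rightarrow> bool) \<Rightarrow> nat \<Rightarrow> nat \<Rightarrow> nat \<Rightarrow> bool" where
  "Mtab E k i j \<longleftrightarrow>
     (\<exists>L R. is_path E L \<and> hd L = Xn k 0 \<and> last L = Xn k i \<and>
            is_path E R \<and> hd R = Yn k j \<and> last R = Yn k 0 \<and>
            (\<forall>p. 1 \<le> p \<and> p \<le> max i j \<longrightarrow>
                 ((Xn k p \<in> set L \<union> set R) \<noteq> (Yn k p \<in> set L \<union> set R))))"

definition lce_x :: "(nat \<Rightarrow> nat \<Rightarrow> bool) \<Rightarrow> nat \<Rightarrow> nat \<Rightarrow> nat" where
  "lce_x E k i = (GREATEST d. i + d \<le> k \<and> (\<forall>t<d. E (Xn k (i + t)) (Xn k (i + t + 1))))"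

definition lce_y :: "(nat \<Rightarrow> nat \<Rightarrow> bool) \<Rightarrow> nat \<Rightarrow> nat \<Rightarrow> nat" where
  "lce_y E k i = (GREATEST d. d \<le> i \<and> (\<forall>t<d. E (Yn k (i - t)) (Yn k (i - t - 1))))"

definition lce_pos :: "(nat \<Rightarrow> nat \<Rightarrow> bool) \<Rightarrow> nat \<Rightarrow> nat \<Rightarrow> nat" where
  "lce_pos E k p = (if p \<le> k then lce_x E k p else lce_y E k (2*k + 1 - p))"

definition dia_pos :: "(nat \<Rightarrow> nat \<Rightarrow> bool) \<Rightarrow> nat \<Rightarrow> nat \<Rightarrow> bool" where
  "dia_pos E k p =
     (if p \<le> k then (p = 0 \<or> Mtab E k p (p - 1))
      else (let j = 2*k + 1 - p in j = 0 \<or> Mtab E k (j - 1) j))"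

text \<open>Each instruction costs one time unit.
  Graph primitives: O(1) edge query; out/in-degree and i-th out/in-neighbour of a node
  (so that adjacency lists can be scanned in time proportional to their length).
  Invalid graph queries return 0.\<close>
datatype instr =
    LoadConst int int
  | AddI int int int
  | SubI int int int
  | LoadInd int int
  | StoreInd int int
  | Jz int nat
  | Jmp nat
  | EdgeQ int int int
  | OutDeg int int
  | OutNth int int int
  | InDeg int int
  | InNth int int int
  | Halt

type_synonym config = "nat \<times> (int \<Rightarrow> int)"

definition valid_node :: "nat \<Rightarrow> int \<Rightarrow> bool" where
  "valid_node k x \<longleftrightarrow> 0 \<le> x \<and> x \<le> 2 * int k + 1"

definition nth_or0 :: "nat list \<Rightarrow> int \<Rightarrow> int" where
  "nth_or0 xs i = (if 0 \<le> i \<and> i < int (length xs) then int (xs ! nat i) else 0)"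

definition halted :: "instr list \<Rightarrow> config \<Rightarrow> bool" where
  "halted P cf \<longleftrightarrow> fst cf \<ge> length P \<or> P ! fst cf = Halt"

fun exec_instr :: "nat \<Rightarrow> (nat \<Rightarrow> nat \<Rightarrow> bool) \<Rightarrow> (nat \<Rightarrow> nat list) \<Rightarrow> (nat \<Rightarrow> nat list)
                   \<Rightarrow> instr \<Rightarrow> config \<Rightarrow> config" where
  "exec_instr k E outl inl (LoadConst a c) (pc, m) = (Suc pc, m(a := c))"
| "exec_instr k E outl inl (AddI a b c) (pc, m) = (Suc pc, m(a := m b + m c))"
| "exec_instr k E outl inl (SubI a b c) (pc, m) = (Suc pc, m(a := m b - m c))"
| "exec_instr k E outl inl (LoadInd a b) (pc, m) = (Suc pc, m(a := m (m b)))"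
| "exec_instr k E outl inl (StoreInd a b) (pc, m) = (Suc pc, m(m a := m b))"
| "exec_instr k E outl inl (Jz a n) (pc, m) = (if m a = 0 then n else Suc pc, m)"
| "exec_instr k E outl inl (Jmp n) (pc, m) = (n, m)"
| "exec_instr k E outl inl (EdgeQ a b c) (pc, m) =
     (Suc pc, m(a := (if valid_node k (m b) \<and> valid_node k (m c) \<and> E (nat (m b)) (nat (m c))
                      then 1 else 0)))"
| "exec_instr k E outl inl (OutDeg a b) (pc, m) =
     (Suc pc, m(a := (if valid_node k (m b) then int (length (outl (nat (m b)))) else 0)))"
| "exec_instr k E outl inl (OutNth a b c) (pc, m) =
     (Suc pc, m(a := (if valid_node k (m b) then nth_or0 (outl (nat (m b))) (m c) else 0)))"
| "exec_instr k E outl inl (InDeg a b) (pc, m) =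
     (Suc pc, m(a := (if valid_node k (m b) then int (length (inl (nat (m b)))) else 0)))"
| "exec_instr k E outl inl (InNth a b c) (pc, m) =
     (Suc pc, m(a := (if valid_node k (m b) then nth_or0 (inl (nat (m b))) (m c) else 0)))"
| "exec_instr k E outl inl Halt cf = cf"

definition step :: "instr list \<Rightarrow> nat \<Rightarrow> (nat \<Rightarrow> nat \<Rightarrow> bool) \<Rightarrow> (nat \<Rightarrow> nat list)
                   \<Rightarrow> (nat \<Rightarrow> nat list) \<Rightarrow> config \<Rightarrow> config" where
  "step P k E outl inl cf = (if halted P cf then cf else exec_instr k E outl inl (P ! fst cf) cf)"

definition run :: "instr list \<Rightarrow> nat \<Rightarrow> (nat \<Rightarrow> nat \<Rightarrow> bool) \<Rightarrow> (nat \<Rightarrow> nat list)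
                   \<Rightarrow> (nat \<Rightarrow> nat list) \<Rightarrow> nat \<Rightarrow> config" where
  "run P k E outl inl t = (step P k E outl inl ^^ t) (0, (\<lambda>_. 0)(0 := int k))"

definition adj_lists :: "nat \<Rightarrow> (nat \<Rightarrow> nat \<Rightarrow> bool) \<Rightarrow> (nat \<Rightarrow> nat list) \<Rightarrow> (nat \<Rightarrow> nat list) \<Rightarrow> bool" where
  "adj_lists k E outl inl \<longleftrightarrow>
     (\<forall>u \<le> 2*k + 1. distinct (outl u) \<and> set (outl u) = {v. E u v} \<and>
                     distinct (inl u) \<and> set (inl u) = {v. E v u})"

definition num_edges :: "nat \<Rightarrow> (nat \<Rightarrow> nat \<Rightarrow> bool) \<Rightarrow> nat" where
  "num_edges k E = card {(u, v). u \<le> 2*k + 1 \<and> v \<le> 2*k + 1 \<and> E u v}"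

end

theory Submission
  imports Defs
begin

text \<open>Both quantities obey recurrences along the listing. A run of consecutive edges starting at
  \<open>x\<^sub>i\<close> either stops immediately or extends the run starting at \<open>x\<^sub>i\<^sub>+\<^sub>1\<close>, so all lce values
  come from two sweeps; moreover \<open>x\<^sub>q \<rightarrow> \<dots> \<rightarrow> x\<^sub>j\<close> is a chain of edges iff the runs from
  \<open>x\<^sub>q\<close> and \<open>x\<^sub>j\<close> end at the same node. For dia, removing the last node of the path \<open>L\<close>
  shows that \<open>M(j+1, j)\<close> holds iff some \<open>u < j\<close> has an edge \<open>x\<^sub>u \<rightarrow> x\<^sub>j\<^sub>+\<^sub>1\<close> and \<open>M(u, j)\<close>.
  Reflecting the listing (\<open>x\<^sub>p \<leftrightarrow> y\<^sub>p\<close>, edges reversed) and removing nodes from \<open>R\<close> in the same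
  way, \<open>M(u, j)\<close> is equivalent to \<open>dia(y\<^sub>u\<^sub>+\<^sub>1)\<close> together with the chain \<open>y\<^sub>j \<rightarrow> \<dots> \<rightarrow> y\<^sub>u\<^sub>+\<^sub>1\<close>,
  which is a comparison of two lce values. Hence \<open>dia(x\<^sub>j\<^sub>+\<^sub>1)\<close> is decided by one pass over the
  in-neighbours of \<open>x\<^sub>j\<^sub>+\<^sub>1\<close>, symmetrically \<open>dia(y\<^sub>j\<^sub>+\<^sub>1)\<close> by one pass over the out-neighbours
  of \<open>y\<^sub>j\<^sub>+\<^sub>1\<close>, and every adjacency-list entry is read at most once.\<close>

section \<open>Paths in spectrum graphs\<close>

definition spectrum_graph :: "nat \<Rightarrow> (nat \<Rightarrow> nat \<Rightarrow> bool) \<Rightarrow> bool" where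
  "spectrum_graph k E \<longleftrightarrow>
     (\<forall>u v. E u v \<longrightarrow> u < v \<and> v \<le> 2*k+1) \<and> (\<forall>u. 1 \<le> u \<and> u \<le> k \<longrightarrow> \<not> E u (2*k+1-u))"

lemma spectrum_graphD:
  assumes "spectrum_graph k E" "E u v"
  shows spectrum_graph_less: "u < v" and spectrum_graph_le: "v \<le> 2*k+1"
  using assms by (auto simp: spectrum_graph_def)

lemma spectrum_graph_no_pair_edge:
  "spectrum_graph k E \<Longrightarrow> 1 \<le> u \<Longrightarrow> u \<le> k \<Longrightarrow> \<not> E u (2*k+1-u)"
  by (simp add: spectrum_graph_def)

lemma spectrum_graph_nc_edge:
  assumes sorted: "sorted_listing W w sw k"
  shows "spectrum_graph k (nc_edge R W w sw k)"
  unfolding spectrum_graph_def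
proof (intro conjI allI impI)
  fix u v assume e: "nc_edge R W w sw k u v"
  then have "u \<le> 2*k+1" "v \<le> 2*k+1" "pos_cord W w sw k u < pos_cord W w sw k v"
    by (simp_all add: nc_edge_def)
  moreover have "\<not> v \<le> u"
  proof
    assume "v \<le> u"
    then have "pos_cord W w sw k v \<le> pos_cord W w sw k u"
      using sorted \<open>u \<le> 2*k+1\<close> unfolding sorted_listing_def by blast
    with calculation show False by simp
  qed
  ultimately show "u < v" "v \<le> 2*k+1" by simp_all
next
  fix u :: nat assume "1 \<le> u \<and> u \<le> k"
  then have "ion_of k u = u" "ion_of k (2*k+1-u) = u"
    by (auto simp: ion_of_def)
  then show "\<not> nc_edge R W w sw k u (2*k+1-u)"
    using \<open>1 \<le> u \<and> u \<le> k\<close> by (simp add: nc_edge_def)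
qed

lemma is_path_iff_successively: "is_path E xs \<longleftrightarrow> xs \<noteq> [] \<and> successively E xs"
  by (simp add: is_path_def successively_conv_nth)

lemma is_path_snoc:
  "is_path E (xs @ [v]) \<longleftrightarrow> xs = [] \<or> is_path E xs \<and> E (last xs) v"
  by (auto simp: is_path_iff_successively successively_append_iff)

lemma is_path_butlast:
  assumes "is_path E L" "hd L \<noteq> last L"
  shows "L = butlast L @ [last L]" "is_path E (butlast L)" "E (last (butlast L)) (last L)"
    "hd (butlast L) = hd L"
proof -
  have "L \<noteq> []" using assms(1) by (simp add: is_path_def)
  then show L: "L = butlast L @ [last L]" by simp
  have "butlast L \<noteq> []" using L assms(2) by (metis append_Nil hd_Nil_eq_last last_snoc list.sel(1))
  then show "is_path E (butlast L)" "E (last (butlast L)) (last L)"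
    using assms(1) is_path_snoc[of E "butlast L" "last L"] L by auto
  show "hd (butlast L) = hd L" using L \<open>butlast L \<noteq> []\<close> by (metis hd_append2)
qed

lemma is_path_increasing_bounds:
  assumes inc: "\<And>u v. E u v \<Longrightarrow> u < (v::nat)" and "is_path E L" "x \<in> set L"
  shows "hd L \<le> x \<and> x \<le> last L"
proof -
  have "successively (<) L"
    using assms(2) successively_mono[of E L "(<)"] inc by (auto simp: is_path_iff_successively)
  then have "sorted_wrt (<) L" by (simp add: successively_conv_sorted_wrt)
  have "hd L \<le> x"
  proof (cases L)
    case (Cons a t)
    then show ?thesis using \<open>sorted_wrt (<) L\<close> assms(3) by auto
  qed (use assms(3) in simp)
  moreover have "x \<le> last L"
  proof (cases L rule: rev_cases)
    case (snoc B l)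
    then show ?thesis using \<open>sorted_wrt (<) L\<close> assms(3) by (auto simp: sorted_wrt_append)
  qed (use assms(3) in simp)
  ultimately show ?thesis ..
qed

section \<open>The table M\<close>

definition one_per_ion :: "nat \<Rightarrow> nat \<Rightarrow> nat set \<Rightarrow> bool" where
  "one_per_ion k n S \<longleftrightarrow> (\<forall>p. 1 \<le> p \<and> p \<le> n \<longrightarrow> (p \<in> S) \<noteq> (2*k+1-p \<in> S))"

lemma Mtab_iff:
  "Mtab E k i j \<longleftrightarrow>
     (\<exists>L R. is_path E L \<and> hd L = 0 \<and> last L = i \<and>
            is_path E R \<and> hd R = 2*k+1-j \<and> last R = 2*k+1 \<and>
            one_per_ion k (max i j) (set L \<union> set R))"
  unfolding Mtab_def one_per_ion_def Xn_def Yn_def by simp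

lemma Mtab_0_0: "Mtab E k 0 0"
  unfolding Mtab_iff one_per_ion_def by (rule exI[of _ "[0]"], rule exI[of _ "[2*k+1]"]) (simp add: is_path_def)

lemma not_Mtab_diag: "1 \<le> j \<Longrightarrow> \<not> Mtab E k j j"
proof
  assume "1 \<le> j" "Mtab E k j j"
  then obtain L R where "is_path E L" "last L = j" "is_path E R" "hd R = 2*k+1-j"
    and one: "one_per_ion k j (set L \<union> set R)"
    unfolding Mtab_iff by auto
  then have "j \<in> set L" "2*k+1-j \<in> set R" by (metis is_path_def last_in_set hd_in_set)+
  then show False using one \<open>1 \<le> j\<close> unfolding one_per_ion_def by auto
qed

lemma one_per_ion_insert:
  assumes S: "\<forall>x\<in>S. x \<le> u \<or> 2*k+1-j \<le> x" and "u < i" "j < i" "i \<le> k"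
  shows "one_per_ion k i (insert i S) \<longleftrightarrow> one_per_ion k (max u j) S \<and> i - 1 \<le> max u j"
proof -
  have same: "p \<noteq> i" "2*k+1-p \<noteq> i" if "p < i" for p
    using that \<open>i \<le> k\<close> by auto
  have fresh: "p \<notin> S" "2*k+1-p \<notin> S" if "max u j < p" "p \<le> i" for p
    using S that assms(2-4) by fastforce+
  show ?thesis
  proof
    assume one: "one_per_ion k i (insert i S)"
    have "i - 1 \<le> max u j"
    proof (rule ccontr)
      assume "\<not> i - 1 \<le> max u j"
      then have "1 \<le> i - 1" "max u j < i - 1" by auto
      then have "(i - 1 \<in> insert i S) \<noteq> (2*k+1-(i-1) \<in> insert i S)"
        using one unfolding one_per_ion_def by simp
      moreover have "i - 1 \<noteq> i" "2*k+1-(i-1) \<noteq> i" using \<open>1 \<le> i - 1\<close> \<open>i \<le> k\<close> by auto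
      ultimately show False using fresh[of "i-1"] \<open>max u j < i - 1\<close> by auto
    qed
    moreover have "one_per_ion k (max u j) S"
      unfolding one_per_ion_def
    proof (intro allI impI)
      fix p assume p: "1 \<le> p \<and> p \<le> max u j"
      then have "p < i" using assms(2,3) by (simp add: max_def split: if_splits)
      then show "(p \<in> S) \<noteq> (2*k+1-p \<in> S)"
        using one[unfolded one_per_ion_def, rule_format, of p] same[of p] p by simp
    qed
    ultimately show "one_per_ion k (max u j) S \<and> i - 1 \<le> max u j" by simp
  next
    assume asm: "one_per_ion k (max u j) S \<and> i - 1 \<le> max u j"
    show "one_per_ion k i (insert i S)"
      unfolding one_per_ion_def
    proof (intro allI impI)
      fix p assume p: "1 \<le> p \<and> p \<le> i"
      show "(p \<in> insert i S) \<noteq> (2*k+1-p \<in> insert i S)"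
      proof (cases "p = i")
        case True
        moreover have "2*k+1-i \<noteq> i" using \<open>i \<le> k\<close> by simp
        ultimately show ?thesis using fresh[of i] assms(2,3) by simp
      next
        case False
        then have "p \<le> max u j" using asm p by linarith
        then show ?thesis
          using asm[THEN conjunct1, unfolded one_per_ion_def, rule_format, of p] same[of p] p False
          by simp
      qed
    qed
  qed
qed

lemma spectrum_path_bounds:
  assumes "spectrum_graph k E" "is_path E L" "x \<in> set L"
  shows "hd L \<le> x \<and> x \<le> last L"
  by (rule is_path_increasing_bounds[of E]) (use assms spectrum_graph_less in blast)+

lemma spectrum_paths_bounds:
  assumes g: "spectrum_graph k E" and "is_path E L" "last L = u" "is_path E R" "hd R = r"
  shows "\<forall>x\<in>set L \<union> set R. x \<le> u \<or> r \<le> x"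
  using spectrum_path_bounds[OF g assms(2)] spectrum_path_bounds[OF g assms(4)] assms(3,5) by auto

lemma Mtab_snoc_iff:
  assumes g: "spectrum_graph k E" and "j < i" "i \<le> k"
  shows "Mtab E k i j \<longleftrightarrow> (\<exists>u. E u i \<and> Mtab E k u j \<and> max u j = i - 1)"
proof
  assume "Mtab E k i j"
  then obtain L R where L: "is_path E L" "hd L = 0" "last L = i"
    and R: "is_path E R" "hd R = 2*k+1-j" "last R = 2*k+1"
    and one: "one_per_ion k (max i j) (set L \<union> set R)"
    unfolding Mtab_iff by blast
  define L0 where "L0 = butlast L"
  have "hd L \<noteq> last L" using L \<open>j < i\<close> by simp
  then have L0: "L = L0 @ [i]" "is_path E L0" "E (last L0) i" "hd L0 = 0"
    using is_path_butlast[OF L(1)] L unfolding L0_def by simp_all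
  have u: "last L0 < i" using spectrum_graph_less[OF g L0(3)] .
  have "set L \<union> set R = insert i (set L0 \<union> set R)" using L0(1) by auto
  then have "one_per_ion k (max (last L0) j) (set L0 \<union> set R)" "i - 1 \<le> max (last L0) j"
    using one one_per_ion_insert[OF spectrum_paths_bounds[OF g L0(2) refl R(1,2)] u assms(2,3)]
      \<open>j < i\<close> by (simp_all add: max_absorb1)
  then have "Mtab E k (last L0) j" "max (last L0) j = i - 1"
    using L0 R u \<open>j < i\<close> unfolding Mtab_iff by auto
  then show "\<exists>u. E u i \<and> Mtab E k u j \<and> max u j = i - 1" using L0(3) by blast
next
  assume "\<exists>u. E u i \<and> Mtab E k u j \<and> max u j = i - 1"
  then obtain u L0 R where e: "E u i" and u: "max u j = i - 1"
    and L0: "is_path E L0" "hd L0 = 0" "last L0 = u"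
    and R: "is_path E R" "hd R = 2*k+1-j" "last R = 2*k+1"
    and one: "one_per_ion k (max u j) (set L0 \<union> set R)"
    unfolding Mtab_iff by blast
  have "L0 \<noteq> []" using L0(1) by (simp add: is_path_def)
  have "u < i" using spectrum_graph_less[OF g e] .
  then have "one_per_ion k i (insert i (set L0 \<union> set R))"
    using one u one_per_ion_insert[OF spectrum_paths_bounds[OF g L0(1,3) R(1,2)] _ assms(2,3)] by simp
  moreover have "set (L0 @ [i]) \<union> set R = insert i (set L0 \<union> set R)" by auto
  moreover have "is_path E (L0 @ [i])" "hd (L0 @ [i]) = 0" "last (L0 @ [i]) = i"
    using L0 e \<open>L0 \<noteq> []\<close> by (simp_all add: is_path_snoc)
  ultimately show "Mtab E k i j"
    using R \<open>j < i\<close> unfolding Mtab_iff by (metis max.strict_order_iff)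
qed

definition chain :: "(nat \<Rightarrow> nat \<Rightarrow> bool) \<Rightarrow> nat \<Rightarrow> nat \<Rightarrow> bool" where
  "chain E a b \<longleftrightarrow> (\<forall>t. a \<le> t \<and> t < b \<longrightarrow> E t (Suc t))"

lemma chain_Suc_right: "a \<le> b \<Longrightarrow> chain E a (Suc b) \<longleftrightarrow> chain E a b \<and> E b (Suc b)"
  unfolding chain_def using less_Suc_eq by auto

lemma chain_Suc_left: "a < b \<Longrightarrow> chain E a b \<longleftrightarrow> E a (Suc a) \<and> chain E (Suc a) b"
  unfolding chain_def using Suc_le_eq le_eq_less_or_eq by auto

lemma Mtab_chain:
  assumes g: "spectrum_graph k E" and "j < i" "i \<le> k"
  shows "Mtab E k i j \<longleftrightarrow> chain E (Suc j) i \<and> Mtab E k (Suc j) j"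
proof -
  obtain d where "i = Suc j + d" using \<open>j < i\<close> less_iff_Suc_add by auto
  with \<open>i \<le> k\<close> show ?thesis
  proof (induction d arbitrary: i)
    case 0
    then show ?case by (auto simp: chain_def)
  next
    case (Suc d)
    have "Mtab E k i j \<longleftrightarrow> E (Suc j + d) i \<and> Mtab E k (Suc j + d) j"
      using Mtab_snoc_iff[OF g, of j i] Suc.prems
      by (auto simp: max_def split: if_splits intro!: exI[of _ "Suc j + d"])
    then show ?case using Suc by (auto simp: chain_Suc_right)
  qed
qed

lemma Mtab_Suc_diag:
  assumes g: "spectrum_graph k E" and "1 \<le> j" "j < k"
  shows "Mtab E k (Suc j) j \<longleftrightarrow> (\<exists>u<j. E u (Suc j) \<and> Mtab E k u j)"
  using Mtab_snoc_iff[OF g, of j "Suc j"] not_Mtab_diag[OF assms(2)] assms(3)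
  by (auto simp: max_def) (metis le_neq_implies_less)

lemma Mtab_1_0:
  assumes g: "spectrum_graph k E" and "1 \<le> k"
  shows "Mtab E k 1 0 \<longleftrightarrow> E 0 1"
  using Mtab_snoc_iff[OF g, of 0 1] Mtab_0_0 assms(2) by auto

section \<open>Reflection of the listing\<close>

definition mirror :: "nat \<Rightarrow> (nat \<Rightarrow> nat \<Rightarrow> bool) \<Rightarrow> nat \<Rightarrow> nat \<Rightarrow> bool" where
  "mirror k E u v \<longleftrightarrow> u \<le> 2*k+1 \<and> v \<le> 2*k+1 \<and> E (2*k+1-v) (2*k+1-u)"

lemma spectrum_graph_mirror:
  assumes g: "spectrum_graph k E"
  shows "spectrum_graph k (mirror k E)"
  unfolding spectrum_graph_def
proof (intro conjI allI impI)
  fix u v assume "mirror k E u v"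
  then show "u < v" "v \<le> 2*k+1"
    using spectrum_graph_less[OF g, of "2*k+1-v" "2*k+1-u"] by (auto simp: mirror_def)
next
  fix u assume "1 \<le> u \<and> u \<le> k"
  then show "\<not> mirror k E u (2*k+1-u)"
    using spectrum_graph_no_pair_edge[OF g, of u] by (simp add: mirror_def)
qed

lemma mirror_mirror:
  assumes g: "spectrum_graph k E"
  shows "mirror k (mirror k E) = E"
proof (intro ext)
  fix u v
  show "mirror k (mirror k E) u v = E u v"
  proof (cases "u \<le> 2*k+1 \<and> v \<le> 2*k+1")
    case False
    then show ?thesis
      using spectrum_graph_less[OF g, of u v] spectrum_graph_le[OF g, of u v]
      by (auto simp: mirror_def)
  qed (auto simp: mirror_def)
qed

lemma chain_mirror:
  assumes "b \<le> 2*k+1"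
  shows "chain (mirror k E) a b \<longleftrightarrow> chain E (2*k+1-b) (2*k+1-a)"
  unfolding chain_def
proof (intro iffI allI impI)
  fix t assume H: "\<forall>t. a \<le> t \<and> t < b \<longrightarrow> mirror k E t (Suc t)" and t: "2*k+1-b \<le> t \<and> t < 2*k+1-a"
  then have "a \<le> 2*k-t \<and> 2*k-t < b" by linarith
  with H have "mirror k E (2*k-t) (Suc (2*k-t))" by blast
  moreover have "2*k+1 - Suc (2*k-t) = t" "2*k+1-(2*k-t) = Suc t" using t by linarith+
  ultimately show "E t (Suc t)" by (simp add: mirror_def)
next
  fix t assume H: "\<forall>t. 2*k+1-b \<le> t \<and> t < 2*k+1-a \<longrightarrow> E t (Suc t)" and t: "a \<le> t \<and> t < b"
  then have "2*k+1-b \<le> 2*k-t \<and> 2*k-t < 2*k+1-a" using assms by linarith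
  with H have "E (2*k-t) (Suc (2*k-t))" by blast
  moreover have "2*k+1 - Suc t = 2*k-t" "2*k+1-t = Suc (2*k-t)" using t assms by linarith+
  ultimately show "mirror k E t (Suc t)" using t assms by (simp add: mirror_def)
qed

lemma is_path_mirror:
  assumes g: "spectrum_graph k E" and "is_path E R"
  shows "is_path (mirror k E) (rev (map (\<lambda>x. 2*k+1-x) R))"
proof -
  have "successively E R" "R \<noteq> []" using assms(2) by (simp_all add: is_path_iff_successively)
  moreover have "E x y \<Longrightarrow> mirror k E (2*k+1-y) (2*k+1-x)" for x y
    using spectrum_graph_less[OF g, of x y] spectrum_graph_le[OF g, of x y]
    by (simp add: mirror_def)
  ultimately show ?thesis
    by (auto simp: is_path_iff_successively successively_map elim: successively_mono)
qed

lemma one_per_ion_reflect: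
  assumes "S \<subseteq> {..2*k+1}" "n \<le> k"
  shows "one_per_ion k n ((\<lambda>x. 2*k+1-x) ` S) \<longleftrightarrow> one_per_ion k n S"
proof -
  have mem: "q \<in> (\<lambda>x. 2*k+1-x) ` S \<longleftrightarrow> 2*k+1-q \<in> S" if "q \<le> 2*k+1" for q
  proof
    assume "q \<in> (\<lambda>x. 2*k+1-x) ` S"
    then obtain x where "x \<in> S" "q = 2*k+1-x" by blast
    moreover have "x \<le> 2*k+1" using assms(1) \<open>x \<in> S\<close> by auto
    ultimately show "2*k+1-q \<in> S" by simp
  next
    assume "2*k+1-q \<in> S"
    then show "q \<in> (\<lambda>x. 2*k+1-x) ` S" using that by (intro image_eqI[of _ _ "2*k+1-q"]) simp_all
  qed
  have "((p \<in> (\<lambda>x. 2*k+1-x) ` S) \<noteq> (2*k+1-p \<in> (\<lambda>x. 2*k+1-x) ` S)) \<longleftrightarrow> ((p \<in> S) \<noteq> (2*k+1-p \<in> S))"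
    if "p \<le> n" for p
    using mem[of p] mem[of "2*k+1-p"] that assms(2) by auto
  then show ?thesis unfolding one_per_ion_def by simp
qed

lemma Mtab_mirror_imp:
  assumes g: "spectrum_graph k E" and "i \<le> k" "j \<le> k" and "Mtab E k i j"
  shows "Mtab (mirror k E) k j i"
proof -
  obtain L R where L: "is_path E L" "hd L = 0" "last L = i"
    and R: "is_path E R" "hd R = 2*k+1-j" "last R = 2*k+1"
    and one: "one_per_ion k (max i j) (set L \<union> set R)"
    using assms(4) unfolding Mtab_iff by blast
  define s where "s = (\<lambda>x::nat. 2*k+1-x)"
  have "L \<noteq> []" "R \<noteq> []" using L(1) R(1) by (simp_all add: is_path_def)
  have "set L \<union> set R \<subseteq> {..2*k+1}"
    using spectrum_path_bounds[OF g L(1)] spectrum_path_bounds[OF g R(1)] L(3) R(3) \<open>i \<le> k\<close>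
    by fastforce
  then have "one_per_ion k (max j i) (set (rev (map s R)) \<union> set (rev (map s L)))"
    using one one_per_ion_reflect[of "set L \<union> set R" k "max i j"] assms(2,3)
    by (simp add: s_def image_Un Un_commute max.commute)
  moreover have "is_path (mirror k E) (rev (map s R))" "is_path (mirror k E) (rev (map s L))"
    using is_path_mirror[OF g] L R unfolding s_def by auto
  moreover have "hd (rev (map s R)) = 0" "last (rev (map s R)) = j"
    "hd (rev (map s L)) = 2*k+1-i" "last (rev (map s L)) = 2*k+1"
    using L R \<open>L \<noteq> []\<close> \<open>R \<noteq> []\<close> \<open>j \<le> k\<close>
    by (simp_all add: hd_rev last_rev hd_map last_map s_def)
  ultimately show ?thesis unfolding Mtab_iff by blast
qed

lemma Mtab_mirror:
  assumes g: "spectrum_graph k E" and "i \<le> k" "j \<le> k"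
  shows "Mtab (mirror k E) k j i \<longleftrightarrow> Mtab E k i j"
  using Mtab_mirror_imp[OF g assms(2,3)] Mtab_mirror_imp[OF spectrum_graph_mirror[OF g] assms(3,2)]
  by (auto simp: mirror_mirror[OF g])

section \<open>Recurrences for dia\<close>

definition dia_x :: "(nat \<Rightarrow> nat \<Rightarrow> bool) \<Rightarrow> nat \<Rightarrow> nat \<Rightarrow> bool" where
  "dia_x E k j \<longleftrightarrow> j = 0 \<or> Mtab E k j (j - 1)"

definition dia_y :: "(nat \<Rightarrow> nat \<Rightarrow> bool) \<Rightarrow> nat \<Rightarrow> nat \<Rightarrow> bool" where
  "dia_y E k j \<longleftrightarrow> j = 0 \<or> Mtab E k (j - 1) j"

lemma dia_x_0 [simp]: "dia_x E k 0" and dia_y_0 [simp]: "dia_y E k 0"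
  by (simp_all add: dia_x_def dia_y_def)

lemma dia_pos_eq: "dia_pos E k p = (if p \<le> k then dia_x E k p else dia_y E k (2*k+1-p))"
  by (simp add: dia_pos_def dia_x_def dia_y_def Let_def)

lemma Mtab_Suc_diag_chain:
  assumes g: "spectrum_graph k E" and j: "1 \<le> j" "j < k"
  shows "Mtab E k (Suc j) j \<longleftrightarrow>
           (\<exists>u<j. E u (Suc j) \<and> dia_y E k (Suc u) \<and> chain E (2*k+1-j) (2*k-u))"
proof -
  have "Mtab E k u j \<longleftrightarrow> chain E (2*k+1-j) (2*k-u) \<and> dia_y E k (Suc u)" if "u < j" for u
  proof -
    have "Mtab E k u j \<longleftrightarrow> Mtab (mirror k E) k j u"
      using Mtab_mirror[OF g] that j by simp
    also have "\<dots> \<longleftrightarrow> chain (mirror k E) (Suc u) j \<and> Mtab (mirror k E) k (Suc u) u"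
      using Mtab_chain[OF spectrum_graph_mirror[OF g] that] j by simp
    also have "\<dots> \<longleftrightarrow> chain E (2*k+1-j) (2*k-u) \<and> dia_y E k (Suc u)"
      using chain_mirror[of j k E "Suc u"] Mtab_mirror[OF g, of u "Suc u"] that j
      by (simp add: dia_y_def)
    finally show ?thesis .
  qed
  then show ?thesis using Mtab_Suc_diag[OF g j] by blast
qed

lemma Mtab_diag_Suc_chain:
  assumes g: "spectrum_graph k E" and j: "1 \<le> j" "j < k"
  shows "Mtab E k j (Suc j) \<longleftrightarrow>
           (\<exists>u<j. E (2*k-j) (2*k+1-u) \<and> dia_x E k (Suc u) \<and> chain E (Suc u) j)"
proof -
  have "Mtab E k j (Suc j) \<longleftrightarrow> Mtab (mirror k E) k (Suc j) j"
    using Mtab_mirror[OF g] j by simp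
  also have "\<dots> \<longleftrightarrow> (\<exists>u<j. mirror k E u (Suc j) \<and> dia_y (mirror k E) k (Suc u) \<and>
                             chain (mirror k E) (2*k+1-j) (2*k-u))"
    using Mtab_Suc_diag_chain[OF spectrum_graph_mirror[OF g] j] .
  also have "\<dots> \<longleftrightarrow> (\<exists>u<j. E (2*k-j) (2*k+1-u) \<and> dia_x E k (Suc u) \<and> chain E (Suc u) j)"
  proof -
    have "mirror k E u (Suc j) \<longleftrightarrow> E (2*k-j) (2*k+1-u)"
      "dia_y (mirror k E) k (Suc u) \<longleftrightarrow> dia_x E k (Suc u)"
      "chain (mirror k E) (2*k+1-j) (2*k-u) \<longleftrightarrow> chain E (Suc u) j" if "u < j" for u
      using that j chain_mirror[of "2*k-u" k E "2*k+1-j"] Mtab_mirror[OF g, of "Suc u" u]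
      by (auto simp: mirror_def dia_x_def dia_y_def Suc_diff_le)
    then show ?thesis by blast
  qed
  finally show ?thesis .
qed

lemma dia_x_1: "spectrum_graph k E \<Longrightarrow> 1 \<le> k \<Longrightarrow> dia_x E k 1 \<longleftrightarrow> E 0 1"
  using Mtab_1_0[of k E] by (simp add: dia_x_def)

lemma dia_y_1:
  assumes g: "spectrum_graph k E" and "1 \<le> k"
  shows "dia_y E k 1 \<longleftrightarrow> E (2*k) (2*k+1)"
  using Mtab_mirror[OF g, of 0 1] Mtab_1_0[OF spectrum_graph_mirror[OF g] assms(2)] assms(2)
  by (simp add: dia_y_def mirror_def)

section \<open>Runs of consecutive edges and lce\<close>

definition run_length :: "(nat \<Rightarrow> nat \<Rightarrow> bool) \<Rightarrow> nat \<Rightarrow> nat \<Rightarrow> nat" where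
  "run_length E b p = (GREATEST d. p + d \<le> b \<and> chain E p (p + d))"

lemma run_length_eqI:
  assumes "p + d \<le> b" "chain E p (p + d)" "p + d < b \<Longrightarrow> \<not> E (p + d) (Suc (p + d))"
  shows "run_length E b p = d"
  unfolding run_length_def
proof (rule Greatest_equality)
  show "p + d \<le> b \<and> chain E p (p + d)" using assms(1,2) ..
next
  fix y assume y: "p + y \<le> b \<and> chain E p (p + y)"
  show "y \<le> d"
  proof (rule ccontr)
    assume "\<not> y \<le> d"
    then show False using y assms(1,3) unfolding chain_def by auto
  qed
qed

lemma run_length_spec:
  assumes "p \<le> b"
  shows "p + run_length E b p \<le> b" "chain E p (p + run_length E b p)"
    "p + run_length E b p < b \<Longrightarrow> \<not> E (p + run_length E b p) (Suc (p + run_length E b p))"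
proof -
  let ?P = "\<lambda>d. p + d \<le> b \<and> chain E p (p + d)"
  have P: "?P (run_length E b p)"
    unfolding run_length_def by (rule GreatestI_nat[of _ 0 b]) (use assms in \<open>auto simp: chain_def\<close>)
  then show "p + run_length E b p \<le> b" "chain E p (p + run_length E b p)" by simp_all
  assume "p + run_length E b p < b"
  show "\<not> E (p + run_length E b p) (Suc (p + run_length E b p))"
  proof
    assume "E (p + run_length E b p) (Suc (p + run_length E b p))"
    with P \<open>p + run_length E b p < b\<close> have "?P (Suc (run_length E b p))"
      by (simp add: chain_Suc_right)
    then have "Suc (run_length E b p) \<le> run_length E b p"
      unfolding run_length_def by (rule Greatest_le_nat[of _ _ b]) simp
    then show False by simp
  qed
qed

lemma run_length_self: "run_length E b b = 0"
  by (rule run_length_eqI) (auto simp: chain_def)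

lemma run_length_rec:
  assumes "p < b"
  shows "run_length E b p = (if E p (Suc p) then Suc (run_length E b (Suc p)) else 0)"
proof (cases "E p (Suc p)")
  case True
  have "chain E p (Suc p + run_length E b (Suc p))"
    using chain_Suc_left[of p "Suc p + run_length E b (Suc p)" E] run_length_spec(2)[of "Suc p" b E]
      assms True by simp
  then show ?thesis
    using True run_length_spec[of "Suc p" b E] assms by (auto intro!: run_length_eqI)
next
  case False
  then show ?thesis using assms by (auto intro!: run_length_eqI simp: chain_def)
qed

lemma chain_iff_run_end:
  assumes "q \<le> j" "j \<le> b"
  shows "chain E q j \<longleftrightarrow> q + run_length E b q = j + run_length E b j"
proof
  assume "chain E q j"
  then have "chain E q (j + run_length E b j)"
    using run_length_spec(2)[of j b E] assms unfolding chain_def by (meson not_le)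
  then have "run_length E b q = j - q + run_length E b j"
    using run_length_spec[of j b E] assms by (intro run_length_eqI) simp_all
  then show "q + run_length E b q = j + run_length E b j" using assms(1) by simp
next
  assume "q + run_length E b q = j + run_length E b j"
  then show "chain E q j"
    using run_length_spec(2)[of q b E] assms unfolding chain_def by auto
qed

lemma lce_x_eq_run_length: "lce_x E k i = run_length E k i"
proof -
  have "(\<forall>t<d. E (i+t) (i+t+1)) \<longleftrightarrow> chain E i (i+d)" for d
    unfolding chain_def by (metis add.commute add_Suc_right add_less_cancel_left le_Suc_ex plus_1_eq_Suc le_add1)
  then show ?thesis by (simp add: lce_x_def Xn_def run_length_def)
qed

lemma lce_y_eq_run_length:
  assumes "i \<le> 2*k+1"
  shows "lce_y E k i = run_length E (2*k+1) (2*k+1-i)"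
proof -
  have "(d \<le> i \<and> (\<forall>t<d. E (2*k+1-(i-t)) (2*k+1-(i-t-1)))) \<longleftrightarrow>
        (2*k+1-i+d \<le> 2*k+1 \<and> chain E (2*k+1-i) (2*k+1-i+d))" for d
  proof (cases "d \<le> i")
    case True
    have "E (2*k+1-(i-t)) (2*k+1-(i-t-1)) \<longleftrightarrow> E (2*k+1-i+t) (Suc (2*k+1-i+t))" if "t < d" for t
      using that True assms by (simp add: Suc_diff_le)
    moreover have "chain E (2*k+1-i) (2*k+1-i+d) \<longleftrightarrow> (\<forall>t<d. E (2*k+1-i+t) (Suc (2*k+1-i+t)))"
      unfolding chain_def by (metis add_less_cancel_left le_Suc_ex le_add1)
    ultimately show ?thesis using True assms by auto
  qed (use assms in auto)
  then show ?thesis by (simp add: lce_y_def Yn_def run_length_def)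
qed

lemma lce_x_self: "lce_x E k k = 0"
  by (simp add: lce_x_eq_run_length run_length_self)

lemma lce_x_rec: "i < k \<Longrightarrow> lce_x E k i = (if E i (Suc i) then Suc (lce_x E k (Suc i)) else 0)"
  by (simp add: lce_x_eq_run_length run_length_rec)

lemma lce_y_0: "lce_y E k 0 = 0"
  by (simp add: lce_y_eq_run_length run_length_self)

lemma lce_y_Suc:
  assumes "j \<le> 2*k"
  shows "lce_y E k (Suc j) = (if E (2*k-j) (2*k+1-j) then Suc (lce_y E k j) else 0)"
proof -
  have "2*k+1 - Suc j = 2*k-j" "Suc (2*k-j) = 2*k+1-j" using assms by simp_all
  then show ?thesis
    using run_length_rec[of "2*k-j" "2*k+1" E] assms by (simp add: lce_y_eq_run_length)
qed

lemma lce_y_le: "i \<le> 2*k+1 \<Longrightarrow> lce_y E k i \<le> i"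
  using run_length_spec(1)[of "2*k+1-i" "2*k+1" E] by (simp add: lce_y_eq_run_length)

lemma chain_iff_lce_x:
  "q \<le> j \<Longrightarrow> j \<le> k \<Longrightarrow> chain E q j \<longleftrightarrow> q + lce_x E k q = j + lce_x E k j"
  by (simp add: lce_x_eq_run_length chain_iff_run_end)

lemma chain_iff_lce_y:
  assumes "q \<le> j" "j \<le> 2*k+1"
  shows "chain E (2*k+1-j) (2*k+1-q) \<longleftrightarrow> int q - int (lce_y E k q) = int j - int (lce_y E k j)"
  using chain_iff_run_end[of "2*k+1-j" "2*k+1-q" "2*k+1" E] assms
    lce_y_le[of q k E] lce_y_le[of j k E]
  by (simp add: lce_y_eq_run_length) linarith

lemma dia_x_Suc_iff:
  assumes g: "spectrum_graph k E" and j: "1 \<le> j" "j < k"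
  shows "dia_x E k (Suc j) \<longleftrightarrow>
           (\<exists>u. E u (Suc j) \<and> u \<noteq> j \<and> dia_y E k (Suc u) \<and>
                int (Suc u) - int (lce_y E k (Suc u)) = int j - int (lce_y E k j))"
proof -
  have "chain E (2*k+1-j) (2*k-u) \<longleftrightarrow>
          int (Suc u) - int (lce_y E k (Suc u)) = int j - int (lce_y E k j)" if "u < j" for u
    using chain_iff_lce_y[of "Suc u" j k E] that j by simp
  moreover have "u < j \<longleftrightarrow> u \<noteq> j" if "E u (Suc j)" for u
    using spectrum_graph_less[OF g that] by auto
  ultimately show ?thesis
    using Mtab_Suc_diag_chain[OF g j] by (simp add: dia_x_def) blast
qed

lemma dia_y_Suc_iff:
  assumes g: "spectrum_graph k E" and j: "1 \<le> j" "j < k"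
  shows "dia_y E k (Suc j) \<longleftrightarrow>
           (\<exists>v. E (2*k-j) v \<and> v \<noteq> 2*k+1-j \<and> dia_x E k (2*k+2-v) \<and>
                (2*k+2-v) + lce_x E k (2*k+2-v) = j + lce_x E k j)"
proof -
  have "dia_y E k (Suc j) \<longleftrightarrow>
          (\<exists>u<j. E (2*k-j) (2*k+1-u) \<and> dia_x E k (Suc u) \<and> Suc u + lce_x E k (Suc u) = j + lce_x E k j)"
  proof -
    have "chain E (Suc u) j \<longleftrightarrow> Suc u + lce_x E k (Suc u) = j + lce_x E k j" if "u < j" for u
      using chain_iff_lce_x[of "Suc u" j k E] that j by simp
    then show ?thesis using Mtab_diag_Suc_chain[OF g j] by (simp add: dia_y_def) blast
  qed
  also have "\<dots> \<longleftrightarrow> (\<exists>v. E (2*k-j) v \<and> v \<noteq> 2*k+1-j \<and> dia_x E k (2*k+2-v) \<and>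
                (2*k+2-v) + lce_x E k (2*k+2-v) = j + lce_x E k j)"
  proof
    assume "\<exists>u<j. E (2*k-j) (2*k+1-u) \<and> dia_x E k (Suc u) \<and> Suc u + lce_x E k (Suc u) = j + lce_x E k j"
    then obtain u where "u < j" "E (2*k-j) (2*k+1-u)" "dia_x E k (Suc u)"
      "Suc u + lce_x E k (Suc u) = j + lce_x E k j" by blast
    moreover have "2*k+2-(2*k+1-u) = Suc u" "2*k+1-u \<noteq> 2*k+1-j" using \<open>u < j\<close> j by simp_all
    ultimately show "\<exists>v. E (2*k-j) v \<and> v \<noteq> 2*k+1-j \<and> dia_x E k (2*k+2-v) \<and>
                (2*k+2-v) + lce_x E k (2*k+2-v) = j + lce_x E k j"
      by (intro exI[of _ "2*k+1-u"]) simp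
  next
    assume "\<exists>v. E (2*k-j) v \<and> v \<noteq> 2*k+1-j \<and> dia_x E k (2*k+2-v) \<and>
                (2*k+2-v) + lce_x E k (2*k+2-v) = j + lce_x E k j"
    then obtain v where v: "E (2*k-j) v" "v \<noteq> 2*k+1-j" "dia_x E k (2*k+2-v)"
      "(2*k+2-v) + lce_x E k (2*k+2-v) = j + lce_x E k j" by blast
    have "2*k-j < v" "v \<le> 2*k+1"
      using spectrum_graph_less[OF g v(1)] spectrum_graph_le[OF g v(1)] by simp_all
    then have "2*k+1-v < j" "2*k+1-(2*k+1-v) = v" "Suc (2*k+1-v) = 2*k+2-v" using v(2) by linarith+
    then show "\<exists>u<j. E (2*k-j) (2*k+1-u) \<and> dia_x E k (Suc u) \<and> Suc u + lce_x E k (Suc u) = j + lce_x E k j"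
      using v by (intro exI[of _ "2*k+1-v"]) simp
  qed
  finally show ?thesis .
qed

section \<open>Degree sums\<close>

lemma sum_reindex_le:
  fixes g :: "'b \<Rightarrow> nat"
  assumes "inj_on f A" "f ` A \<subseteq> B" "finite B"
  shows "(\<Sum>a\<in>A. g (f a)) \<le> (\<Sum>b\<in>B. g b)"
proof -
  have "(\<Sum>a\<in>A. g (f a)) = (\<Sum>b\<in>f ` A. g b)" by (simp add: sum.reindex[OF assms(1)])
  also have "\<dots> \<le> (\<Sum>b\<in>B. g b)" using assms(2,3) by (intro sum_mono2) auto
  finally show ?thesis .
qed

lemma num_edges_eq_sum: "num_edges k E = (\<Sum>u\<le>2*k+1. card {v. v \<le> 2*k+1 \<and> E u v})"
proof -
  have "{(u, v). u \<le> 2*k+1 \<and> v \<le> 2*k+1 \<and> E u v} = Sigma {..2*k+1} (\<lambda>u. {v. v \<le> 2*k+1 \<and> E u v})"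
    by auto
  moreover have "finite {v. v \<le> 2*k+1 \<and> E u v}" for u by simp
  ultimately show ?thesis unfolding num_edges_def by simp
qed

lemma num_edges_converse: "num_edges k (\<lambda>u v. E v u) = num_edges k E"
proof -
  have "{(u, v). u \<le> 2*k+1 \<and> v \<le> 2*k+1 \<and> E v u} = prod.swap ` {(u, v). u \<le> 2*k+1 \<and> v \<le> 2*k+1 \<and> E u v}"
    by auto
  then show ?thesis unfolding num_edges_def by (simp add: card_image)
qed

lemma sum_out_degrees:
  assumes g: "spectrum_graph k E" and adj: "adj_lists k E outl inl"
  shows "(\<Sum>u\<le>2*k+1. length (outl u)) = num_edges k E"
proof -
  have "length (outl u) = card {v. v \<le> 2*k+1 \<and> E u v}" if "u \<le> 2*k+1" for u
  proof -
    have "length (outl u) = card {v. E u v}"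
      using adj that unfolding adj_lists_def by (simp flip: distinct_card)
    also have "{v. E u v} = {v. v \<le> 2*k+1 \<and> E u v}" using spectrum_graph_le[OF g, of u] by blast
    finally show ?thesis .
  qed
  then show ?thesis by (simp add: num_edges_eq_sum)
qed

lemma sum_in_degrees:
  assumes g: "spectrum_graph k E" and adj: "adj_lists k E outl inl"
  shows "(\<Sum>v\<le>2*k+1. length (inl v)) = num_edges k E"
proof -
  have "length (inl v) = card {u. u \<le> 2*k+1 \<and> E u v}" if "v \<le> 2*k+1" for v
  proof -
    have "length (inl v) = card {u. E u v}"
      using adj that unfolding adj_lists_def by (simp flip: distinct_card)
    also have "{u. E u v} = {u. u \<le> 2*k+1 \<and> E u v}"
      using that spectrum_graph_less[OF g, of _ v] by force
    finally show ?thesis .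
  qed
  then have "(\<Sum>v\<le>2*k+1. length (inl v)) = (\<Sum>v\<le>2*k+1. card {u. u \<le> 2*k+1 \<and> E u v})"
    by (intro sum.cong) simp_all
  also have "\<dots> = num_edges k (\<lambda>u v. E v u)"
    by (rule num_edges_eq_sum[symmetric])
  also have "\<dots> = num_edges k E"
    by (rule num_edges_converse)
  finally show ?thesis .
qed

section \<open>Bounded runs of RAM programs\<close>

lemma funpow_fixed: "f x = x \<Longrightarrow> (f ^^ n) x = x"
  by (induction n) simp_all

locale machine =
  fixes P :: "instr list" and k :: nat and E :: "nat \<Rightarrow> nat \<Rightarrow> bool" and outl inl :: "nat \<Rightarrow> nat list"
begin

abbreviation st :: "config \<Rightarrow> config" where
  "st \<equiv> step P k E outl inl"

definition reaches :: "nat \<Rightarrow> config \<Rightarrow> nat \<Rightarrow> ((int \<Rightarrow> int) \<Rightarrow> bool) \<Rightarrow> bool" where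
  "reaches T c pc Q \<longleftrightarrow> (\<exists>n\<le>T. fst ((st ^^ n) c) = pc \<and> Q (snd ((st ^^ n) c)))"

lemma reaches_stop: "Q m \<Longrightarrow> reaches T (pc, m) pc Q"
  unfolding reaches_def by (intro exI[of _ 0]) simp

lemma reaches_step:
  assumes "0 < T" "reaches (T - 1) (st c) pc Q"
  shows "reaches T c pc Q"
proof -
  obtain n where "n \<le> T - 1" "fst ((st ^^ n) (st c)) = pc" "Q (snd ((st ^^ n) (st c)))"
    using assms(2) unfolding reaches_def by blast
  moreover have "(st ^^ Suc n) c = (st ^^ n) (st c)" by (simp only: funpow_Suc_right o_apply)
  ultimately show ?thesis
    unfolding reaches_def using assms(1) by (intro exI[of _ "Suc n"]) simp
qed

lemma reaches_step_eq:
  assumes "pc \<noteq> pc'" "0 < T"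
  shows "reaches T (pc, m) pc' Q \<longleftrightarrow> reaches (T - 1) (st (pc, m)) pc' Q"
proof
  assume "reaches T (pc, m) pc' Q"
  then obtain n where n: "n \<le> T" "fst ((st ^^ n) (pc, m)) = pc'" "Q (snd ((st ^^ n) (pc, m)))"
    unfolding reaches_def by blast
  with assms(1) obtain n' where "n = Suc n'" by (cases n) auto
  then have "(st ^^ n) (pc, m) = (st ^^ n') (st (pc, m))" by (simp only: funpow_Suc_right o_apply)
  with n \<open>n = Suc n'\<close> show "reaches (T - 1) (st (pc, m)) pc' Q"
    unfolding reaches_def by (intro exI[of _ n']) simp
qed (use assms reaches_step in blast)

lemma reaches_trans:
  assumes "reaches T1 c pc Q" "\<And>m. Q m \<Longrightarrow> reaches T2 (pc, m) pc' R"
  shows "reaches (T1 + T2) c pc' R"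
proof -
  obtain n1 where n1: "n1 \<le> T1" "fst ((st ^^ n1) c) = pc" "Q (snd ((st ^^ n1) c))"
    using assms(1) unfolding reaches_def by blast
  then have "(st ^^ n1) c = (pc, snd ((st ^^ n1) c))" by (metis prod.collapse)
  moreover obtain n2 where "n2 \<le> T2" "fst ((st ^^ n2) (pc, snd ((st ^^ n1) c))) = pc'"
    "R (snd ((st ^^ n2) (pc, snd ((st ^^ n1) c))))"
    using assms(2)[OF n1(3)] unfolding reaches_def by blast
  ultimately show ?thesis
    unfolding reaches_def using n1(1) by (intro exI[of _ "n2 + n1"]) (simp add: funpow_add)
qed

lemma reaches_mono:
  assumes "reaches T c pc Q" "T \<le> T'" "\<And>m. Q m \<Longrightarrow> R m"
  shows "reaches T' c pc R"
  using assms unfolding reaches_def by (blast intro: order.trans)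

lemma reaches_while:
  assumes "I n m"
    and body: "\<And>n m. I (Suc n) m \<Longrightarrow> reaches (T n) (pc, m) pc (I n)"
    and exit: "\<And>m. I 0 m \<Longrightarrow> reaches T0 (pc, m) pc' Q"
  shows "reaches ((\<Sum>i<n. T i) + T0) (pc, m) pc' Q"
  using assms(1)
proof (induction n arbitrary: m)
  case 0
  then show ?case using exit by simp
next
  case (Suc n)
  have "reaches (T n + ((\<Sum>i<n. T i) + T0)) (pc, m) pc' Q"
    using reaches_trans[OF body[OF Suc.prems] Suc.IH] .
  then show ?case by (simp add: add_ac)
qed

lemma run_after_reaching_halt:
  assumes "reaches T c pc Q" "\<And>m. halted P (pc, m)" "T \<le> N"
  shows "halted P ((st ^^ N) c) \<and> Q (snd ((st ^^ N) c))"
proof -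
  obtain n where n: "n \<le> T" "fst ((st ^^ n) c) = pc" "Q (snd ((st ^^ n) c))"
    using assms(1) unfolding reaches_def by blast
  define cf where "cf = (st ^^ n) c"
  have "halted P cf" using assms(2)[of "snd cf"] n(2) unfolding cf_def by (metis prod.collapse)
  then have "(st ^^ (N - n)) cf = cf" by (intro funpow_fixed) (simp add: step_def)
  moreover have "(st ^^ N) c = (st ^^ (N - n)) cf"
    using n(1) assms(3) unfolding cf_def by (simp flip: funpow_add o_apply[of "st ^^ (N - n)"])
  ultimately show ?thesis using \<open>halted P cf\<close> n(3) unfolding cf_def by simp
qed

lemma st_eval:
  "st (pc, m) = (if pc < length P \<and> P ! pc \<noteq> Halt then exec_instr k E outl inl (P ! pc) (pc, m) else (pc, m))"
  by (simp add: step_def halted_def not_le)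

end

section \<open>The algorithm\<close>

text \<open>Cell \<open>2p+1\<close> receives lce and cell \<open>2p+2\<close> receives dia of the node at position \<open>p\<close>; thus
  \<open>x\<^sub>q\<close> uses cells \<open>2q+1, 2q+2\<close> and \<open>y\<^sub>q\<close> uses cells \<open>4k+3-2q, 4k+4-2q\<close>. Cell 0 holds \<open>k\<close>,
  cells \<open>-1, \<dots>, -4\<close> hold the constants \<open>1, 2k+1, 4k+3, 0\<close>, cell \<open>-5\<close> is the loop counter and
  lower cells are scratch registers. Instructions 8--24 compute \<open>lce(x\<^sub>k), \<dots>, lce(x\<^sub>0)\<close>,
  25--43 compute \<open>lce(y\<^sub>0), \<dots>, lce(y\<^sub>k)\<close>, 44--56 set dia of \<open>x\<^sub>0, y\<^sub>0, x\<^sub>1, y\<^sub>1\<close>, and the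
  loop 57--128 computes \<open>dia(x\<^sub>j\<^sub>+\<^sub>1)\<close> by scanning the in-neighbours of \<open>x\<^sub>j\<^sub>+\<^sub>1\<close> (67--86)
  and \<open>dia(y\<^sub>j\<^sub>+\<^sub>1)\<close> by scanning the out-neighbours of \<open>y\<^sub>j\<^sub>+\<^sub>1\<close> (102--122).\<close>

definition prog :: "instr list" where
  "prog = [
    Jmp 2,
    Halt,
    LoadConst (-1) 1,
    LoadConst (-4) 0,
    AddI (-2) 0 0,
    AddI (-2) (-2) (-1),
    AddI (-3) (-2) (-2),
    AddI (-3) (-3) (-1),
    StoreInd (-2) (-4),
    AddI (-5) 0 (-4),
    Jz (-5) 25,
    SubI (-5) (-5) (-1),
    AddI (-6) (-5) (-1),
    EdgeQ (-10) (-5) (-6),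
    AddI (-7) (-5) (-5),
    AddI (-7) (-7) (-1),
    Jz (-10) 23,
    AddI (-8) (-7) (-1),
    AddI (-8) (-8) (-1),
    LoadInd (-9) (-8),
    AddI (-9) (-9) (-1),
    StoreInd (-7) (-9),
    Jmp 10,
    StoreInd (-7) (-4),
    Jmp 10,
    StoreInd (-3) (-4),
    LoadConst (-5) 0,
    SubI (-6) 0 (-5),
    Jz (-6) 44,
    AddI (-5) (-5) (-1),
    SubI (-6) (-2) (-5),
    AddI (-7) (-6) (-1),
    EdgeQ (-10) (-6) (-7),
    SubI (-8) (-3) (-5),
    SubI (-8) (-8) (-5),
    Jz (-10) 42,
    AddI (-9) (-8) (-1),
    AddI (-9) (-9) (-1),
    LoadInd (-7) (-9),
    AddI (-7) (-7) (-1),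
    StoreInd (-8) (-7),
    Jmp 27,
    StoreInd (-8) (-4),
    Jmp 27,
    LoadConst (-6) 2,
    StoreInd (-6) (-1),
    AddI (-6) (-3) (-1),
    StoreInd (-6) (-1),
    Jz 0 129,
    LoadConst (-6) 4,
    EdgeQ (-10) (-4) (-1),
    StoreInd (-6) (-10),
    SubI (-7) (-2) (-1),
    EdgeQ (-10) (-7) (-2),
    SubI (-6) (-3) (-1),
    StoreInd (-6) (-10),
    LoadConst (-5) 1,
    SubI (-6) 0 (-5),
    Jz (-6) 129,
    LoadConst (-11) 0,
    SubI (-6) (-3) (-5),
    SubI (-6) (-6) (-5),
    LoadInd (-7) (-6),
    SubI (-15) (-5) (-7),
    AddI (-14) (-5) (-1),
    InDeg (-12) (-14),
    LoadConst (-13) 0,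
    SubI (-6) (-12) (-13),
    Jz (-6) 87,
    InNth (-16) (-14) (-13),
    AddI (-13) (-13) (-1),
    SubI (-6) (-16) (-5),
    Jz (-6) 67,
    AddI (-7) (-16) (-16),
    SubI (-8) (-3) (-7),
    SubI (-8) (-8) (-1),
    LoadInd (-9) (-8),
    Jz (-9) 67,
    SubI (-8) (-8) (-1),
    LoadInd (-9) (-8),
    AddI (-7) (-16) (-1),
    SubI (-7) (-7) (-9),
    SubI (-7) (-7) (-15),
    Jz (-7) 85,
    Jmp 67,
    LoadConst (-11) 1,
    Jmp 67,
    AddI (-6) (-5) (-5),
    AddI (-6) (-6) (-1),
    AddI (-6) (-6) (-1),
    AddI (-6) (-6) (-1),
    AddI (-6) (-6) (-1),
    StoreInd (-6) (-11),
    LoadConst (-11) 0,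
    AddI (-6) (-5) (-5),
    AddI (-6) (-6) (-1),
    LoadInd (-7) (-6),
    AddI (-15) (-5) (-7),
    SubI (-14) (-2) (-5),
    SubI (-14) (-14) (-1),
    OutDeg (-12) (-14),
    LoadConst (-13) 0,
    SubI (-6) (-12) (-13),
    Jz (-6) 123,
    OutNth (-16) (-14) (-13),
    AddI (-13) (-13) (-1),
    SubI (-6) (-2) (-5),
    SubI (-6) (-16) (-6),
    Jz (-6) 102,
    SubI (-7) (-2) (-16),
    AddI (-7) (-7) (-1),
    AddI (-8) (-7) (-7),
    AddI (-8) (-8) (-1),
    AddI (-9) (-8) (-1),
    LoadInd (-9) (-9),
    Jz (-9) 102,
    LoadInd (-9) (-8),
    AddI (-9) (-9) (-7),
    SubI (-9) (-9) (-15),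
    Jz (-9) 121,
    Jmp 102,
    LoadConst (-11) 1,
    Jmp 102,
    SubI (-6) (-3) (-5),
    SubI (-6) (-6) (-5),
    SubI (-6) (-6) (-1),
    StoreInd (-6) (-11),
    AddI (-5) (-5) (-1),
    Jmp 57,
    Halt]"

definition base_regs :: "nat \<Rightarrow> (int \<Rightarrow> int) \<Rightarrow> bool" where
  "base_regs k m \<longleftrightarrow>
     m 0 = int k \<and> m (-1) = 1 \<and> m (-2) = 2*int k+1 \<and> m (-3) = 4*int k+3 \<and> m (-4) = 0"

locale ram = machine prog k E outl inl for k E outl inl
begin

lemma prog_length: "length prog = 130"
  by (simp add: prog_def)

lemmas prog_nth = prog_def[THEN arg_cong, where f = "\<lambda>p. p ! n" for n]

lemma nat_int_plus_one: "nat (int i + 1) = Suc i" "nat (1 + int i) = Suc i"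
  by simp_all

lemmas ram_simps = reaches_step_eq st_eval prog_length prog_nth nat_int_plus_one
  valid_node_def nth_or0_def fun_upd_apply base_regs_def

lemma init_registers: "reaches 7 (0, (\<lambda>_. 0)(0 := int k)) 8 (base_regs k)"
  by (simp add: ram_simps) (auto intro!: reaches_stop simp: base_regs_def)

definition lce_x_cells :: "nat \<Rightarrow> (int \<Rightarrow> int) \<Rightarrow> bool" where
  "lce_x_cells i m \<longleftrightarrow> (\<forall>q. i \<le> q \<and> q \<le> k \<longrightarrow> m (2 * int q + 1) = int (lce_x E k q))"

lemma lce_x_cells_upd_neg [simp]: "x < 0 \<Longrightarrow> lce_x_cells i (m(x := v)) = lce_x_cells i m"
  unfolding lce_x_cells_def by auto

lemma lce_x_cells_upd_high [simp]:
  "2 * int k + 1 < x \<Longrightarrow> lce_x_cells i (m(x := v)) = lce_x_cells i m"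
  unfolding lce_x_cells_def by auto

lemma lce_x_cells_upd_even [simp]:
  assumes "even x"
  shows "lce_x_cells i (m(x := v)) = lce_x_cells i m"
proof -
  have "2 * int q + 1 \<noteq> x" for q using assms by auto
  then show ?thesis unfolding lce_x_cells_def by simp
qed

lemma lce_x_init:
  "base_regs k m \<Longrightarrow> reaches 2 (8, m) 10 (\<lambda>m'. base_regs k m' \<and> m' (-5) = int k \<and> lce_x_cells k m')"
  by (simp add: ram_simps)
    (auto intro!: reaches_stop simp: lce_x_cells_def lce_x_self)

lemma lce_x_iteration:
  assumes "base_regs k m" "m (-5) = int (Suc i)" "Suc i \<le> k" "lce_x_cells (Suc i) m"
  shows "reaches 13 (10, m) 10 (\<lambda>m'. base_regs k m' \<and> m' (-5) = int i \<and> i \<le> k \<and> lce_x_cells i m')"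
proof -
  have "m (2 * int (Suc i) + 1) = int (lce_x E k (Suc i))"
    using assms(3,4) unfolding lce_x_cells_def by blast
  then have "m (3 + 2 * int i) = int (lce_x E k (Suc i))" by (simp add: algebra_simps)
  show ?thesis
    by (rule reaches_step) (use assms \<open>m (3 + 2 * int i) = _\<close> in \<open>simp_all add: ram_simps,
        auto intro!: reaches_stop simp: lce_x_cells_def lce_x_rec le_Suc_eq\<close>)
qed

lemma lce_x_phase:
  assumes "base_regs k m"
  shows "reaches (13 * k + 3) (8, m) 25 (\<lambda>m'. base_regs k m' \<and> lce_x_cells 0 m')"
proof -
  let ?I = "\<lambda>i m. base_regs k m \<and> m (-5) = int i \<and> i \<le> k \<and> lce_x_cells i m"
  have "reaches ((\<Sum>i<k. 13) + 1) (10, m) 25 (\<lambda>m'. base_regs k m' \<and> lce_x_cells 0 m')" if "?I k m" for m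
    using that
  proof (rule reaches_while[where I = ?I])
    show "reaches 13 (10, m) 10 (?I i)" if "?I (Suc i) m" for i m
      using lce_x_iteration that by blast
    show "reaches 1 (10, m) 25 (\<lambda>m'. base_regs k m' \<and> lce_x_cells 0 m')" if "?I 0 m" for m
      using that by (simp add: ram_simps) (auto intro!: reaches_stop)
  qed
  from reaches_trans[OF lce_x_init[OF assms] this] show ?thesis
    by (rule reaches_mono) simp_all
qed

definition lce_y_cells :: "nat \<Rightarrow> (int \<Rightarrow> int) \<Rightarrow> bool" where
  "lce_y_cells j m \<longleftrightarrow> (\<forall>q\<le>j. m (4 * int k + 3 - 2 * int q) = int (lce_y E k q))"

lemma lce_y_cells_upd_neg [simp]: "x < 0 \<Longrightarrow> j \<le> k \<Longrightarrow> lce_y_cells j (m(x := v)) = lce_y_cells j m"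
  unfolding lce_y_cells_def by auto

lemma lce_y_cells_upd_even [simp]:
  assumes "even x"
  shows "lce_y_cells j (m(x := v)) = lce_y_cells j m"
proof -
  have "4 * int k + 3 - 2 * int q \<noteq> x" for q using assms by auto
  then show ?thesis unfolding lce_y_cells_def by simp
qed

lemma lce_y_iteration:
  assumes "base_regs k m" "m (-5) = int j" "j < k" "lce_y_cells j m" "lce_x_cells 0 m"
  shows "reaches 15 (27, m) 27
           (\<lambda>m'. base_regs k m' \<and> m' (-5) = int (Suc j) \<and> lce_y_cells (Suc j) m' \<and> lce_x_cells 0 m')"
proof -
  have "m (4 * int k + 3 - 2 * int j) = int (lce_y E k j)"
    using assms(4) unfolding lce_y_cells_def by blast
  then have cell: "m (3 + (4 * int k - 2 * int j)) = int (lce_y E k j)" by (simp add: algebra_simps)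
  have nodes: "nat (2 * int k - int j) = 2*k - j" "nat (2 * int k - int j + 1) = 2*k+1 - j"
    using assms(3) by auto
  show ?thesis
    by (rule reaches_step, simp, cases "E (2*k-j) (2*k+1-j)")
      (use assms cell nodes in \<open>simp_all add: ram_simps,
        auto intro!: reaches_stop simp: lce_y_cells_def lce_y_Suc le_Suc_eq\<close>)
qed

lemma lce_y_phase:
  assumes "base_regs k m" "lce_x_cells 0 m"
  shows "reaches (15 * k + 4) (25, m) 44 (\<lambda>m'. base_regs k m' \<and> lce_x_cells 0 m' \<and> lce_y_cells k m')"
proof -
  let ?I = "\<lambda>n m. base_regs k m \<and> n \<le> k \<and> m (-5) = int (k - n) \<and> lce_y_cells (k - n) m \<and> lce_x_cells 0 m"
  have "reaches 2 (25, m) 27 (?I k)"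
    using assms by (simp add: ram_simps)
      (auto intro!: reaches_stop simp: lce_y_cells_def lce_y_0)
  moreover have "reaches ((\<Sum>i<k. 15) + 2) (27, m) 44 (\<lambda>m'. base_regs k m' \<and> lce_x_cells 0 m' \<and> lce_y_cells k m')"
    if "?I k m" for m
    using that
  proof (rule reaches_while[where I = ?I])
    show "reaches 15 (27, m) 27 (?I n)" if "?I (Suc n) m" for n m
      using lce_y_iteration[of m "k - Suc n"] that
      by (auto simp: Suc_diff_Suc elim!: reaches_mono)
    show "reaches 2 (27, m) 44 (\<lambda>m'. base_regs k m' \<and> lce_x_cells 0 m' \<and> lce_y_cells k m')"
      if "?I 0 m" for m
      using that by (simp add: ram_simps) (auto intro!: reaches_stop)
  qed
  ultimately show ?thesis
    by (rule reaches_mono[OF reaches_trans]) simp_all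
qed

definition dia_cells :: "nat \<Rightarrow> (int \<Rightarrow> int) \<Rightarrow> bool" where
  "dia_cells j m \<longleftrightarrow> (\<forall>q\<le>j. m (2 * int q + 2) = of_bool (dia_x E k q) \<and>
                              m (4 * int k + 4 - 2 * int q) = of_bool (dia_y E k q))"

lemma dia_cells_upd_neg [simp]: "x < 0 \<Longrightarrow> j \<le> k \<Longrightarrow> dia_cells j (m(x := v)) = dia_cells j m"
  unfolding dia_cells_def by auto

lemma dia_cells_upd_odd [simp]:
  assumes "odd x"
  shows "dia_cells j (m(x := v)) = dia_cells j m"
proof -
  have "2 * int q + 2 \<noteq> x" "4 * int k + 4 - 2 * int q \<noteq> x" for q using assms by auto
  then show ?thesis unfolding dia_cells_def by simp
qed

lemma dia_cells_upd_between [simp]: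
  "2 * int j + 2 < x \<Longrightarrow> x < 4 * int k + 4 - 2 * int j \<Longrightarrow> dia_cells j (m(x := v)) = dia_cells j m"
  unfolding dia_cells_def by auto

lemma dia_cells_Suc:
  "dia_cells (Suc j) m \<longleftrightarrow> dia_cells j m \<and> m (2 * int j + 4) = of_bool (dia_x E k (Suc j)) \<and>
                              m (4 * int k + 2 - 2 * int j) = of_bool (dia_y E k (Suc j))"
proof -
  have "2 * int (Suc j) + 2 = 2 * int j + 4" "4 * int k + 4 - 2 * int (Suc j) = 4 * int k + 2 - 2 * int j"
    by simp_all
  moreover have "(\<forall>q\<le>Suc j. P q) \<longleftrightarrow> (\<forall>q\<le>j. P q) \<and> P (Suc j)" for P
    using le_Suc_eq by auto
  ultimately show ?thesis unfolding dia_cells_def by (simp only:)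
qed

definition dia_loop_inv :: "nat \<Rightarrow> (int \<Rightarrow> int) \<Rightarrow> bool" where
  "dia_loop_inv j m \<longleftrightarrow> base_regs k m \<and> m (-5) = int j \<and> lce_x_cells 0 m \<and> lce_y_cells k m \<and> dia_cells j m"

lemma dia_loop_inv_upd [simp]: "x < -5 \<Longrightarrow> j \<le> k \<Longrightarrow> dia_loop_inv j (m(x := v)) = dia_loop_inv j m"
  unfolding dia_loop_inv_def base_regs_def by simp

lemma dia_init:
  assumes "base_regs k m" "lce_x_cells 0 m" "lce_y_cells k m"
  shows "reaches 4 (44, m) 48 (\<lambda>m'. base_regs k m' \<and> lce_x_cells 0 m' \<and> lce_y_cells k m' \<and> dia_cells 0 m')"
  by (insert assms, simp split del: if_split split_of_bool add: ram_simps;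
      rule reaches_stop; simp add: dia_cells_def base_regs_def)

lemma halt_without_ions: "m 0 = 0 \<Longrightarrow> reaches 1 (48, m) 129 ((=) m)"
  by (simp add: ram_simps reaches_stop)

lemma dia_base:
  assumes g: "spectrum_graph k E" and "1 \<le> k"
    and "base_regs k m" "lce_x_cells 0 m" "lce_y_cells k m" "dia_cells 0 m"
  shows "reaches 9 (48, m) 57 (dia_loop_inv 1)"
proof -
  have nodes: "nat (2 * int k) = 2*k" "nat (2 * int k + 1) = 2*k+1" by simp_all
  show ?thesis
    by (insert nodes dia_x_1[OF g assms(2)] dia_y_1[OF g assms(2)] assms(2-6), cases "E 0 1"; cases "E (2*k) (2*k+1)";
        simp split del: if_split split_of_bool add: ram_simps;
        rule reaches_stop; simp add: dia_loop_inv_def base_regs_def dia_cells_Suc[of 0, simplified])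
qed

definition in_witness :: "nat \<Rightarrow> nat \<Rightarrow> bool" where
  "in_witness j u \<longleftrightarrow> u \<noteq> j \<and> dia_y E k (Suc u) \<and>
     int (Suc u) - int (lce_y E k (Suc u)) = int j - int (lce_y E k j)"

lemma in_witness_iff:
  assumes g: "spectrum_graph k E" and adj: "adj_lists k E outl inl" and j: "1 \<le> j" "j < k"
  shows "(\<exists>u\<in>set (inl (Suc j)). in_witness j u) \<longleftrightarrow> dia_x E k (Suc j)"
  using dia_x_Suc_iff[OF g j] adj j unfolding adj_lists_def in_witness_def by auto

definition in_scan :: "nat \<Rightarrow> nat \<Rightarrow> (int \<Rightarrow> int) \<Rightarrow> bool" where
  "in_scan j n m \<longleftrightarrow> dia_loop_inv j m \<and> n \<le> length (inl (Suc j)) \<and>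
     m (-14) = int (Suc j) \<and> m (-12) = int (length (inl (Suc j))) \<and>
     m (-13) = int (length (inl (Suc j)) - n) \<and> m (-15) = int j - int (lce_y E k j) \<and>
     m (-11) = of_bool (\<exists>u \<in> set (take (length (inl (Suc j)) - n) (inl (Suc j))). in_witness j u)"

lemma in_scan_start:
  assumes "dia_loop_inv j m" "j < k"
  shows "reaches 10 (57, m) 67 (in_scan j (length (inl (Suc j))))"
proof -
  have "m (4 * int k + 3 - 2 * int j) = int (lce_y E k j)"
    using assms unfolding dia_loop_inv_def lce_y_cells_def by simp
  then show ?thesis
    using assms unfolding dia_loop_inv_def
    by (simp add: ram_simps) (auto intro!: reaches_stop simp: in_scan_def dia_loop_inv_def base_regs_def)
qed

lemma in_scan_step:
  assumes g: "spectrum_graph k E" and adj: "adj_lists k E outl inl" and j: "1 \<le> j" "j < k"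
    and scan: "in_scan j (Suc n) m"
  shows "reaches 19 (67, m) 67 (in_scan j n)"
proof -
  define xs where "xs = inl (Suc j)"
  define idx where "idx = length xs - Suc n"
  define u where "u = xs ! idx"
  have idx: "idx < length xs" "length xs - n = Suc idx" "m (-13) = int idx"
    using scan unfolding in_scan_def xs_def idx_def by auto
  then have "u \<in> set xs" unfolding u_def by simp
  then have "E u (Suc j)" using adj j unfolding adj_lists_def xs_def by auto
  then have "u \<le> j" using spectrum_graph_less[OF g] by fastforce
  have take: "take (length xs - n) xs = take idx xs @ [u]"
    using idx unfolding u_def by (simp add: take_Suc_conv_app_nth)
  have dia: "m (2 + (4 * int k - 2 * int u)) = of_bool (dia_y E k (Suc u))" if "u \<noteq> j"
  proof -
    have "dia_cells j m" "Suc u \<le> j" using scan that \<open>u \<le> j\<close> by (simp_all add: in_scan_def dia_loop_inv_def)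
    then have "m (4 * int k + 4 - 2 * int (Suc u)) = of_bool (dia_y E k (Suc u))"
      unfolding dia_cells_def by blast
    then show ?thesis by (simp add: algebra_simps)
  qed
  have lce: "m (1 + (4 * int k - 2 * int u)) = int (lce_y E k (Suc u))"
  proof -
    have "lce_y_cells k m" "Suc u \<le> k" using scan j \<open>u \<le> j\<close> by (simp_all add: in_scan_def dia_loop_inv_def)
    then have "m (4 * int k + 3 - 2 * int (Suc u)) = int (lce_y E k (Suc u))"
      unfolding lce_y_cells_def by blast
    then show ?thesis by (simp add: algebra_simps)
  qed
  consider (own_index) "u = j" | (not_dia) "u \<noteq> j" "\<not> dia_y E k (Suc u)"
    | (hit) "u \<noteq> j" "dia_y E k (Suc u)"
        "int (Suc u) - int (lce_y E k (Suc u)) = int j - int (lce_y E k j)"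
    | (miss) "u \<noteq> j" "dia_y E k (Suc u)"
        "int (Suc u) - int (lce_y E k (Suc u)) \<noteq> int j - int (lce_y E k j)"
    by blast
  then have "reaches (19 - 1) (st (67, m)) 67 (in_scan j n)"
    by cases (insert scan idx take dia lce j \<open>u \<le> j\<close>, simp split del: if_split split_of_bool
          add: ram_simps in_scan_def dia_loop_inv_def xs_def[symmetric] u_def[symmetric] idx_def[symmetric];
        rule reaches_stop; simp add: in_scan_def dia_loop_inv_def base_regs_def in_witness_def xs_def[symmetric])+
  then show ?thesis by (rule reaches_step[rotated]) simp

qed

definition out_witness :: "nat \<Rightarrow> nat \<Rightarrow> bool" where
  "out_witness j v \<longleftrightarrow> v \<noteq> 2*k+1-j \<and> dia_x E k (2*k+2-v) \<and>
     (2*k+2-v) + lce_x E k (2*k+2-v) = j + lce_x E k j"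

lemma out_witness_iff:
  assumes g: "spectrum_graph k E" and adj: "adj_lists k E outl inl" and j: "1 \<le> j" "j < k"
  shows "(\<exists>v\<in>set (outl (2*k-j)). out_witness j v) \<longleftrightarrow> dia_y E k (Suc j)"
  using dia_y_Suc_iff[OF g j] adj j unfolding adj_lists_def out_witness_def by auto

definition out_scan :: "nat \<Rightarrow> nat \<Rightarrow> (int \<Rightarrow> int) \<Rightarrow> bool" where
  "out_scan j n m \<longleftrightarrow> dia_loop_inv j m \<and> m (2 * int j + 4) = of_bool (dia_x E k (Suc j)) \<and>
     n \<le> length (outl (2*k-j)) \<and>
     m (-14) = 2 * int k - int j \<and> m (-12) = int (length (outl (2*k-j))) \<and>
     m (-13) = int (length (outl (2*k-j)) - n) \<and> m (-15) = int j + int (lce_x E k j) \<and>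
     m (-11) = of_bool (\<exists>v \<in> set (take (length (outl (2*k-j)) - n) (outl (2*k-j))). out_witness j v)"

lemma in_scan_exit:
  assumes g: "spectrum_graph k E" and adj: "adj_lists k E outl inl" and j: "1 \<le> j" "j < k"
    and scan: "in_scan j 0 m"
  shows "reaches 17 (67, m) 102 (out_scan j (length (outl (2*k-j))))"
proof -
  have lce: "m (2 * int j + 1) = int (lce_x E k j)"
    using scan j unfolding in_scan_def dia_loop_inv_def lce_x_cells_def by simp
  have node: "nat (2 * int k - int j) = 2*k - j" using j by simp
  show ?thesis
    by (insert lce node scan j in_witness_iff[OF g adj j], simp split del: if_split split_of_bool add: ram_simps in_scan_def dia_loop_inv_def;
        rule reaches_stop; simp add: out_scan_def dia_loop_inv_def base_regs_def)
qed

lemma in_scan_loop: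
  assumes g: "spectrum_graph k E" and adj: "adj_lists k E outl inl" and j: "1 \<le> j" "j < k"
    and "in_scan j (length (inl (Suc j))) m"
  shows "reaches (19 * length (inl (Suc j)) + 17) (67, m) 102 (out_scan j (length (outl (2*k-j))))"
  using reaches_while[where I = "in_scan j", OF assms(5) in_scan_step[OF g adj j] in_scan_exit[OF g adj j]]
  by (simp add: mult.commute)

lemma out_scan_step:
  assumes g: "spectrum_graph k E" and adj: "adj_lists k E outl inl" and j: "1 \<le> j" "j < k"
    and scan: "out_scan j (Suc n) m"
  shows "reaches 20 (102, m) 102 (out_scan j n)"
proof -
  define ys where "ys = outl (2*k-j)"
  define idx where "idx = length ys - Suc n"
  define v where "v = ys ! idx"
  define q where "q = 2*k+2-v"
  have "Suc n \<le> length ys" "m (-13) = int (length ys - Suc n)"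
    using scan unfolding out_scan_def ys_def by auto
  then have idx: "idx < length ys" "length ys - n = Suc idx" "m (-13) = int idx"
    unfolding idx_def by (simp_all add: Suc_diff_Suc)
  then have "v \<in> set ys" unfolding v_def by simp
  then have "E (2*k-j) v" using adj j unfolding adj_lists_def ys_def by auto
  then have v: "2*k-j < v" "v \<le> 2*k+1"
    using spectrum_graph_less[OF g] spectrum_graph_le[OF g] by auto
  then have q: "1 \<le> q" "q \<le> Suc j" "int v = 2 * int k + 2 - int q"
      "v = 2*k+1-j \<longleftrightarrow> q = Suc j" "2*k+2-v = q"
    unfolding q_def using j by auto
  have take: "take (length ys - n) ys = take idx ys @ [v]"
    using idx unfolding v_def by (simp add: take_Suc_conv_app_nth)
  have dia: "m (2 + 2 * int q) = of_bool (dia_x E k q)" if "q \<le> j"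
  proof -
    have "dia_cells j m" using scan by (simp add: out_scan_def dia_loop_inv_def)
    then have "m (2 * int q + 2) = of_bool (dia_x E k q)"
      using that unfolding dia_cells_def by blast
    then show ?thesis by (simp add: algebra_simps)
  qed
  have lce: "m (2 * int q + 1) = int (lce_x E k q)"
  proof -
    have "lce_x_cells 0 m" using scan by (simp add: out_scan_def dia_loop_inv_def)
    then show ?thesis using q j unfolding lce_x_cells_def by simp
  qed
  have node: "nat (2 * int k - int j) = 2*k - j" using j by simp
  consider (own_pair) "q = Suc j" | (not_dia) "q \<noteq> Suc j" "\<not> dia_x E k q"
    | (hit) "q \<noteq> Suc j" "dia_x E k q" "q + lce_x E k q = j + lce_x E k j"
    | (miss) "q \<noteq> Suc j" "dia_x E k q" "q + lce_x E k q \<noteq> j + lce_x E k j"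
    by blast
  then have "reaches (20 - 1) (st (102, m)) 102 (out_scan j n)"
    by cases (insert scan idx take dia lce node q j, simp split del: if_split split_of_bool
          add: ram_simps out_scan_def dia_loop_inv_def ys_def[symmetric] v_def[symmetric] idx_def[symmetric];
        rule reaches_stop; simp add: out_scan_def dia_loop_inv_def base_regs_def out_witness_def ys_def[symmetric])+
  then show ?thesis by (rule reaches_step[rotated]) simp
qed

lemma out_scan_exit:
  assumes g: "spectrum_graph k E" and adj: "adj_lists k E outl inl" and j: "1 \<le> j" "j < k"
    and scan: "out_scan j 0 m"
  shows "reaches 8 (102, m) 57 (dia_loop_inv (Suc j))"
proof -
  have parity: "4 * int k + 2 - 2 * int j \<noteq> 2 * int j + 4" "2 * int j + 4 \<noteq> 4 * int k + 2 - 2 * int j"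
    by presburger+
  show ?thesis
    by (insert parity scan j out_witness_iff[OF g adj j], simp split del: if_split split_of_bool
          add: ram_simps out_scan_def dia_loop_inv_def;
        rule reaches_stop; simp add: dia_loop_inv_def base_regs_def dia_cells_Suc)
qed

lemma out_scan_loop:
  assumes g: "spectrum_graph k E" and adj: "adj_lists k E outl inl" and j: "1 \<le> j" "j < k"
    and "out_scan j (length (outl (2*k-j))) m"
  shows "reaches (20 * length (outl (2*k-j)) + 8) (102, m) 57 (dia_loop_inv (Suc j))"
  using reaches_while[where I = "out_scan j", OF assms(5) out_scan_step[OF g adj j] out_scan_exit[OF g adj j]]
  by (simp add: mult.commute)

lemma dia_iteration:
  assumes g: "spectrum_graph k E" and adj: "adj_lists k E outl inl" and j: "1 \<le> j" "j < k"
    and "dia_loop_inv j m"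
  shows "reaches (35 + 20 * (length (inl (Suc j)) + length (outl (2*k-j)))) (57, m) 57 (dia_loop_inv (Suc j))"
proof -
  have "reaches (10 + ((19 * length (inl (Suc j)) + 17) + (20 * length (outl (2*k-j)) + 8))) (57, m) 57
          (dia_loop_inv (Suc j))"
  proof (rule reaches_trans[OF in_scan_start[OF assms(5) j(2)]])
    fix m' assume "in_scan j (length (inl (Suc j))) m'"
    then show "reaches ((19 * length (inl (Suc j)) + 17) + (20 * length (outl (2*k-j)) + 8)) (67, m') 57
                 (dia_loop_inv (Suc j))"
      by (rule reaches_trans[OF in_scan_loop[OF g adj j]]) (rule out_scan_loop[OF g adj j])
  qed
  then show ?thesis by (rule reaches_mono) simp_all
qed

definition outputs_ready :: "(int \<Rightarrow> int) \<Rightarrow> bool" where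
  "outputs_ready m \<longleftrightarrow> lce_x_cells 0 m \<and> lce_y_cells k m \<and> dia_cells k m"

lemma dia_loop:
  assumes g: "spectrum_graph k E" and adj: "adj_lists k E outl inl" and "1 \<le> k" "dia_loop_inv 1 m"
  shows "reaches ((\<Sum>n<k-1. 35 + 20 * (length (inl (k - n)) + length (outl (k + Suc n)))) + 2)
           (57, m) 129 outputs_ready"
proof (rule reaches_while[where I = "\<lambda>n m. dia_loop_inv (k - n) m \<and> n < k"])
  show "dia_loop_inv (k - (k - 1)) m \<and> k - 1 < k" using assms(3,4) by simp
next
  fix n m assume "dia_loop_inv (k - Suc n) m \<and> Suc n < k"
  then have "reaches (35 + 20 * (length (inl (Suc (k - Suc n))) + length (outl (2*k - (k - Suc n)))))
               (57, m) 57 (dia_loop_inv (Suc (k - Suc n)))"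
    by (intro dia_iteration[OF g adj]) auto
  moreover have "Suc (k - Suc n) = k - n" "2*k - (k - Suc n) = k + Suc n"
    using \<open>dia_loop_inv (k - Suc n) m \<and> Suc n < k\<close> by auto
  ultimately show "reaches (35 + 20 * (length (inl (k - n)) + length (outl (k + Suc n)))) (57, m) 57
                     (\<lambda>m. dia_loop_inv (k - n) m \<and> n < k)"
    using \<open>dia_loop_inv (k - Suc n) m \<and> Suc n < k\<close> by (auto elim: reaches_mono)
next
  fix m assume "dia_loop_inv (k - 0) m \<and> 0 < k"
  then show "reaches 2 (57, m) 129 outputs_ready"
    by - (simp split del: if_split split_of_bool add: ram_simps dia_loop_inv_def;
        rule reaches_stop; simp add: outputs_ready_def dia_loop_inv_def)
qed

lemma outputs_ready_cells:
  assumes "outputs_ready m" "p \<le> 2*k+1"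
  shows "m (2 * int p + 1) = int (lce_pos E k p) \<and> m (2 * int p + 2) = (if dia_pos E k p then 1 else 0)"
proof (cases "p \<le> k")
  case True
  then have "m (2 * int p + 1) = int (lce_x E k p)" "m (2 * int p + 2) = of_bool (dia_x E k p)"
    using assms(1) unfolding outputs_ready_def lce_x_cells_def dia_cells_def by blast+
  then show ?thesis using True by (simp add: lce_pos_def dia_pos_eq)
next
  case False
  define q where "q = 2*k+1-p"
  have q: "q \<le> k" "2*k+1-p = q" using False assms(2) unfolding q_def by auto
  have addr: "4 * int k + 3 - 2 * int q = 2 * int p + 1" "4 * int k + 4 - 2 * int q = 2 * int p + 2"
    using False assms(2) unfolding q_def by auto
  have "m (4 * int k + 3 - 2 * int q) = int (lce_y E k q)"
    "m (4 * int k + 4 - 2 * int q) = of_bool (dia_y E k q)"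
    using assms(1) q(1) unfolding outputs_ready_def lce_y_cells_def dia_cells_def by blast+
  then have "m (2 * int p + 1) = int (lce_y E k q)" "m (2 * int p + 2) = of_bool (dia_y E k q)"
    unfolding addr .
  then show ?thesis using False q(2) by (simp add: lce_pos_def dia_pos_eq)
qed

lemma dia_loop_cost:
  assumes g: "spectrum_graph k E" and adj: "adj_lists k E outl inl"
  shows "(\<Sum>n<k-1. 35 + 20 * (length (inl (k - n)) + length (outl (k + Suc n))))
           \<le> 35 * k + 40 * num_edges k E"
proof -
  have "(\<Sum>n<k-1. length (inl (k - n))) \<le> (\<Sum>v\<le>2*k+1. length (inl v))"
    by (rule sum_reindex_le) (auto simp: inj_on_def)
  moreover have "(\<Sum>n<k-1. length (outl (k + Suc n))) \<le> (\<Sum>u\<le>2*k+1. length (outl u))"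
    by (rule sum_reindex_le) (auto simp: inj_on_def)
  moreover have "(\<Sum>n<k-1. 35 + 20 * (length (inl (k - n)) + length (outl (k + Suc n)))) =
      35 * (k - 1) + 20 * (\<Sum>n<k-1. length (inl (k - n))) + 20 * (\<Sum>n<k-1. length (outl (k + Suc n)))"
    by (simp add: sum.distrib sum_distrib_left)
  ultimately show ?thesis
    using sum_in_degrees[OF g adj] sum_out_degrees[OF g adj] by linarith
qed

lemma program_reaches_outputs:
  assumes g: "spectrum_graph k E" and adj: "adj_lists k E outl inl"
  shows "reaches (29 + 63 * k + 40 * num_edges k E) (0, (\<lambda>_. 0)(0 := int k)) 129 outputs_ready"
proof -
  have lce: "reaches (7 + (13 * k + 3) + (15 * k + 4) + 4) (0, (\<lambda>_. 0)(0 := int k)) 48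
               (\<lambda>m. base_regs k m \<and> lce_x_cells 0 m \<and> lce_y_cells k m \<and> dia_cells 0 m)"
    by (rule reaches_trans[OF reaches_trans[OF reaches_trans[OF init_registers lce_x_phase]
          lce_y_phase]]; (rule dia_init)?) auto
  show ?thesis
  proof (cases "k = 0")
    case True
    have "reaches (7 + (13 * k + 3) + (15 * k + 4) + 4 + 1) (0, (\<lambda>_. 0)(0 := int k)) 129 outputs_ready"
    proof (rule reaches_trans[OF lce])
      fix m assume m: "base_regs k m \<and> lce_x_cells 0 m \<and> lce_y_cells k m \<and> dia_cells 0 m"
      then have "m 0 = 0" using True by (simp add: base_regs_def)
      have "outputs_ready m" using m True unfolding outputs_ready_def by simp
      then show "reaches 1 (48, m) 129 outputs_ready"
        using halt_without_ions[of m] \<open>m 0 = 0\<close> by (auto elim: reaches_mono)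
    qed
    then show ?thesis by (rule reaches_mono) simp_all
  next
    case False
    then have "1 \<le> k" by simp
    have "reaches (7 + (13 * k + 3) + (15 * k + 4) + 4 + (9 +
            ((\<Sum>n<k-1. 35 + 20 * (length (inl (k - n)) + length (outl (k + Suc n)))) + 2)))
            (0, (\<lambda>_. 0)(0 := int k)) 129 outputs_ready"
    proof (rule reaches_trans[OF lce])
      fix m assume "base_regs k m \<and> lce_x_cells 0 m \<and> lce_y_cells k m \<and> dia_cells 0 m"
      then have "reaches 9 (48, m) 57 (dia_loop_inv 1)" using dia_base[OF g \<open>1 \<le> k\<close>] by simp
      then show "reaches (9 + ((\<Sum>n<k-1. 35 + 20 * (length (inl (k - n)) + length (outl (k + Suc n)))) + 2))
                   (48, m) 129 outputs_ready"
        by (rule reaches_trans) (rule dia_loop[OF g adj \<open>1 \<le> k\<close>])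
    qed
    then show ?thesis
      by (rule reaches_mono) (use dia_loop_cost[OF g adj] in simp_all)
  qed
qed

end

theorem lemma4:
  "\<exists>(P :: instr list) (c :: nat).
     \<forall>(R :: real set) (W :: real) (w :: nat \<Rightarrow> real) (sw :: nat \<Rightarrow> bool) (k :: nat)
       (outl :: nat \<Rightarrow> nat list) (inl :: nat \<Rightarrow> nat list).
       finite R \<and> (\<forall>r\<in>R. r > 0) \<and> sorted_listing W w sw k \<and>
       adj_lists k (nc_edge R W w sw k) outl inl \<longrightarrow>
       (let E = nc_edge R W w sw k;
            cf = run P k E outl inl (c * ((2*k + 2) + num_edges k E))
        in halted P cf \<and>
           (\<forall>p \<le> 2*k + 1.
              snd cf (2 * int p + 1) = int (lce_pos E k p) \<and>
              snd cf (2 * int p + 2) = (if dia_pos E k p then 1 else 0)))"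
proof (intro exI[of _ prog] exI[of _ 100] allI impI)
  fix R :: "real set" and W :: real and w :: "nat \<Rightarrow> real" and sw :: "nat \<Rightarrow> bool" and k :: nat
    and outl inl :: "nat \<Rightarrow> nat list"
  assume "finite R \<and> (\<forall>r\<in>R. r > 0) \<and> sorted_listing W w sw k \<and>
       adj_lists k (nc_edge R W w sw k) outl inl"
  then have g: "spectrum_graph k (nc_edge R W w sw k)" and adj: "adj_lists k (nc_edge R W w sw k) outl inl"
    using spectrum_graph_nc_edge by blast+
  define E where "E = nc_edge R W w sw k"
  define cf where "cf = run prog k E outl inl (100 * ((2*k + 2) + num_edges k E))"
  have "halted prog cf \<and> ram.outputs_ready k E (snd cf)"
    unfolding cf_def run_def
  proof (rule machine.run_after_reaching_halt[OF ram.program_reaches_outputs])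
    show "spectrum_graph k E" "adj_lists k E outl inl" using g adj unfolding E_def by simp_all
    show "halted prog (129, m)" for m by (simp add: halted_def prog_def)
  qed simp
  then show "let E = nc_edge R W w sw k; cf = run prog k E outl inl (100 * ((2*k + 2) + num_edges k E))
        in halted prog cf \<and> (\<forall>p \<le> 2*k + 1. snd cf (2 * int p + 1) = int (lce_pos E k p) \<and>
              snd cf (2 * int p + 2) = (if dia_pos E k p then 1 else 0))"
    using ram.outputs_ready_cells[of k E "snd cf"] unfolding Let_def E_def[symmetric] cf_def[symmetric]
    by blast
qed

end
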